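(* Let $n\ge1$. For all integers $p_n,\dots,p_1,q\ge0$, the unit map $\eta\Delta[p_n,\dots,p_1,q]\colon\Delta[p_n,\dots,p_1,q]\to NK\Delta[p_n,\dots,p_1,q]$ of the adjunction $K\dashv N$ is a Reedy equivalence in $\mathrm{s}^n\mathcal S$.
   Context: An $n$-relative category $\mathcal C=(a\mathcal C,v_1\mathcal C,\dots,v_n\mathcal C,w\mathcal C)$ consists of a category $a\mathcal C$ and subcategories $v_1\mathcal C,\dots,v_n\mathcal C,w\mathcal C\subset a\mathcal C$, each containing all objects, with $w\mathcal C\subset v_i\mathcal C$ for all $i$, such that (i) every map of $a\mathcal C$ is a finite composite of maps in the $v_i\mathcal C$, and (ii) every relation in $a\mathcal C$ is a consequence of the commutativity of squares $y_2x_1=x_2y_1$ with $x_1,x_2\in v_i\mathcal C$, $y_1,y_2\in v_j\mathcal C$. $\mathbf{Rel}^n\mathbf{Cat}$ is the category of small $n$-relative categories and functors of ambient categories preserving $w$ and each $v_i$. For $p\ge0$, $\mathbf p$ is the poset $0\to\cdots\to p$ and $|\mathbf p|$ its discrete subcategory; $\mathbf p_n^{v_n}\times\cdots\times\mathbf p_1^{v_1}\times\mathbf q^w$ is the $n$-relative category with ambient category $\mathbf p_n\times\cdots\times\mathbf p_1\times\mathbf q$, $w=|\mathbf p_n|\times\cdots\times|\mathbf p_1|\times\mathbf q$, $v_i=|\mathbf p_n|\times\cdots\times\mathbf p_i\times\cdots\times|\mathbf p_1|\times\mathbf q$. $\mathrm{s}^n\mathcal S$ is the category of $(n+1)$-simplicial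 sets with multisimplices indexed by $(p_n,\dots,p_1,q)$ and standard (representable) multisimplices $\Delta[p_n,\dots,p_1,q]$. $N\mathcal C$ has as $(p_n,\dots,p_1,q)$-simplices the relative functors $\mathbf p_n^{v_n}\times\cdots\times\mathbf p_1^{v_1}\times\mathbf q^w\to\mathcal C$; $K$ is its left adjoint, with $K\Delta[p_n,\dots,p_1,q]=\mathbf p_n^{v_n}\times\cdots\times\mathbf p_1^{v_1}\times\mathbf q^w$. A map $X\to Y$ in $\mathrm{s}^n\mathcal S$ is a Reedy equivalence if for each $(p_n,\dots,p_1)$ the map of simplicial sets $X_{p_n,\dots,p_1,\bullet}\to Y_{p_n,\dots,p_1,\bullet}$ is a weak equivalence. *)

theory Defs
  imports "HOL-Analysis.Analysis" "HOL-Homology.Homology"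
begin

text \<open>Monotone maps [k] -> [m], represented canonically as the list of their values.\<close>
definition mono_list :: "nat \<Rightarrow> nat \<Rightarrow> nat list set" where
  "mono_list k m = {\<theta>. length \<theta> = Suc k \<and> sorted \<theta> \<and> (\<forall>i\<in>set \<theta>. i \<le> m)}"

text \<open>A simplicial set is given by its sets of simplices X k (k >= 0) and the action
  act theta : X m -> X k of a monotone map theta : [k] -> [m] (theta^* ).\<close>

text \<open>Induced map on topological simplices, theta_* : Delta^k -> Delta^m.\<close>
definition simplex_map :: "nat list \<Rightarrow> (nat \<Rightarrow> real) \<Rightarrow> (nat \<Rightarrow> real)" where
  "simplex_map \<theta> t = (\<lambda>j. \<Sum>i\<in>{i. i < length \<theta> \<and> \<theta> ! i = j}. t i)"

definition real_carrier :: "(nat \<Rightarrow> 'a set) \<Rightarrow> (nat \<times> 'a \<times> (nat \<Rightarrow> real)) set" where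
  "real_carrier X = {(k, x, t). x \<in> X k \<and> t \<in> standard_simplex k}"

definition real_pre :: "(nat \<Rightarrow> 'a set) \<Rightarrow> (nat \<times> 'a \<times> (nat \<Rightarrow> real)) topology" where
  "real_pre X = sum_topology
     (\<lambda>k. prod_topology (discrete_topology (X k))
                        (subtopology (powertop_real UNIV) (standard_simplex k))) UNIV"

definition real_rel :: "(nat \<Rightarrow> 'a set) \<Rightarrow> (nat list \<Rightarrow> 'a \<Rightarrow> 'a)
    \<Rightarrow> (nat \<times> 'a \<times> (nat \<Rightarrow> real)) \<Rightarrow> (nat \<times> 'a \<times> (nat \<Rightarrow> real)) \<Rightarrow> bool" where
  "real_rel X act a b \<longleftrightarrow>
     (\<exists>k m \<theta> x t. \<theta> \<in> mono_list k m \<and> x \<in> X m \<and> t \<in> standard_simplex k \<and>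
        a = (k, act \<theta> x, t) \<and> b = (m, x, simplex_map \<theta> t))"

definition real_class :: "(nat \<Rightarrow> 'a set) \<Rightarrow> (nat list \<Rightarrow> 'a \<Rightarrow> 'a)
    \<Rightarrow> (nat \<times> 'a \<times> (nat \<Rightarrow> real)) \<Rightarrow> (nat \<times> 'a \<times> (nat \<Rightarrow> real)) set" where
  "real_class X act a = {b \<in> real_carrier X. equivclp (real_rel X act) a b}"

definition realization :: "(nat \<Rightarrow> 'a set) \<Rightarrow> (nat list \<Rightarrow> 'a \<Rightarrow> 'a)
    \<Rightarrow> (nat \<times> 'a \<times> (nat \<Rightarrow> real)) set topology" where
  "realization X act = topology (\<lambda>U. U \<subseteq> real_class X act ` real_carrier X \<and>
      openin (real_pre X) {a \<in> real_carrier X. real_class X act a \<in> U})"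

definition realize_map :: "(nat \<Rightarrow> 'b set) \<Rightarrow> (nat list \<Rightarrow> 'b \<Rightarrow> 'b) \<Rightarrow> (nat \<Rightarrow> 'a \<Rightarrow> 'b)
    \<Rightarrow> (nat \<times> 'a \<times> (nat \<Rightarrow> real)) set \<Rightarrow> (nat \<times> 'b \<times> (nat \<Rightarrow> real)) set" where
  "realize_map Y actY F c =
     (case (SOME a. a \<in> c) of (k, x, t) \<Rightarrow> real_class Y actY (k, F k x, t))"

definition sph_base :: "nat \<Rightarrow> real" where
  "sph_base = (\<lambda>i. if i = 0 then 1 else 0)"

text \<open>Weak homotopy equivalence: continuous, and bijective on all (pointed) homotopy
  sets pi_k(X, x0) -> pi_k(Y, g x0), k >= 0, for every base point x0 (a bijective
  homomorphism of groups being an isomorphism).\<close>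
definition weak_homotopy_equivalence :: "'a topology \<Rightarrow> 'b topology \<Rightarrow> ('a \<Rightarrow> 'b) \<Rightarrow> bool" where
  "weak_homotopy_equivalence X Y g \<longleftrightarrow> continuous_map X Y g \<and>
    (\<forall>k. \<forall>x0\<in>topspace X.
      (\<forall>\<beta>. continuous_map (nsphere k) Y \<beta> \<and> \<beta> sph_base = g x0 \<longrightarrow>
         (\<exists>\<alpha>. continuous_map (nsphere k) X \<alpha> \<and> \<alpha> sph_base = x0 \<and>
              homotopic_with (\<lambda>h. h sph_base = g x0) (nsphere k) Y (g \<circ> \<alpha>) \<beta>)) \<and>
      (\<forall>\<alpha>1 \<alpha>2. continuous_map (nsphere k) X \<alpha>1 \<and> \<alpha>1 sph_base = x0 \<and>
               continuous_map (nsphere k) X \<alpha>2 \<and> \<alpha>2 sph_base = x0 \<and>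
               homotopic_with (\<lambda>h. h sph_base = g x0) (nsphere k) Y (g \<circ> \<alpha>1) (g \<circ> \<alpha>2) \<longrightarrow>
               homotopic_with (\<lambda>h. h sph_base = x0) (nsphere k) X \<alpha>1 \<alpha>2))"

definition sset_weq :: "(nat \<Rightarrow> 'a set) \<Rightarrow> (nat list \<Rightarrow> 'a \<Rightarrow> 'a)
    \<Rightarrow> (nat \<Rightarrow> 'b set) \<Rightarrow> (nat list \<Rightarrow> 'b \<Rightarrow> 'b) \<Rightarrow> (nat \<Rightarrow> 'a \<Rightarrow> 'b) \<Rightarrow> bool" where
  "sset_weq X actX Y actY F \<longleftrightarrow>
     weak_homotopy_equivalence (realization X actX) (realization Y actY) (realize_map Y actY F)"

text \<open>(n+1)-simplicial sets are presented by their simplices X ps q indexed by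
  ps = [p_n,...,p_1] (a list of length n) and q, together with the simplicial
  action in the last (q) direction, which is all that the Reedy equivalence
  condition refers to.\<close>
definition reedy_weq :: "nat \<Rightarrow> (nat list \<Rightarrow> nat \<Rightarrow> 'a set) \<Rightarrow> (nat list \<Rightarrow> nat list \<Rightarrow> 'a \<Rightarrow> 'a)
    \<Rightarrow> (nat list \<Rightarrow> nat \<Rightarrow> 'b set) \<Rightarrow> (nat list \<Rightarrow> nat list \<Rightarrow> 'b \<Rightarrow> 'b)
    \<Rightarrow> (nat list \<Rightarrow> nat \<Rightarrow> 'a \<Rightarrow> 'b) \<Rightarrow> bool" where
  "reedy_weq n X actX Y actY F \<longleftrightarrow>
     (\<forall>ps'. length ps' = n \<longrightarrow> sset_weq (X ps') (actX ps') (Y ps') (actY ps') (F ps'))"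

definition Delta_simp :: "nat list \<Rightarrow> nat \<Rightarrow> nat list \<Rightarrow> nat \<Rightarrow> (nat list list \<times> nat list) set" where
  "Delta_simp ps q ps' q' = {(\<alpha>s, \<beta>). length \<alpha>s = length ps \<and>
      (\<forall>i<length ps. \<alpha>s ! i \<in> mono_list (ps' ! i) (ps ! i)) \<and> \<beta> \<in> mono_list q' q}"

definition Delta_act :: "nat list \<Rightarrow> nat list \<Rightarrow> (nat list list \<times> nat list) \<Rightarrow> (nat list list \<times> nat list)" where
  "Delta_act ps' \<theta> s = (fst s, map (\<lambda>i. snd s ! i) \<theta>)"

definition Obj :: "nat list \<Rightarrow> nat \<Rightarrow> (nat list \<times> nat) set" where
  "Obj ps q = {(xs, y). length xs = length ps \<and> (\<forall>i<length ps. xs ! i \<le> ps ! i) \<and> y \<le> q}"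

text \<open>There is a (unique) morphism a -> b iff a <= b componentwise.\<close>
definition leq :: "(nat list \<times> nat) \<Rightarrow> (nat list \<times> nat) \<Rightarrow> bool" where
  "leq a b \<longleftrightarrow> list_all2 (\<le>) (fst a) (fst b) \<and> snd a \<le> snd b"

text \<open>w = |p_n| x ... x |p_1| x q.\<close>
definition in_w :: "(nat list \<times> nat) \<Rightarrow> (nat list \<times> nat) \<Rightarrow> bool" where
  "in_w a b \<longleftrightarrow> leq a b \<and> fst a = fst b"

text \<open>v_i = |p_n| x ... x p_i x ... x |p_1| x q (i indexes the list position).\<close>
definition in_v :: "nat \<Rightarrow> (nat list \<times> nat) \<Rightarrow> (nat list \<times> nat) \<Rightarrow> bool" where
  "in_v i a b \<longleftrightarrow> leq a b \<and> (\<forall>j<length (fst a). j \<noteq> i \<longrightarrow> fst a ! j = fst b ! j)"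

text \<open>(ps',q')-simplices of N K Delta[ps,q]: relative functors
  p'_n^{v_n} x ... x p'_1^{v_1} x q'^w -> p_n^{v_n} x ... x p_1^{v_1} x q^w, i.e.
  monotone maps of the posets preserving w and each v_i (as extensional functions).\<close>
definition NK_simp :: "nat list \<Rightarrow> nat \<Rightarrow> nat list \<Rightarrow> nat \<Rightarrow> (nat list \<times> nat \<Rightarrow> nat list \<times> nat) set" where
  "NK_simp ps q ps' q' = {f. f \<in> extensional (Obj ps' q') \<and> f \<in> Obj ps' q' \<rightarrow> Obj ps q \<and>
      (\<forall>a\<in>Obj ps' q'. \<forall>b\<in>Obj ps' q'. leq a b \<longrightarrow> leq (f a) (f b)) \<and>
      (\<forall>a\<in>Obj ps' q'. \<forall>b\<in>Obj ps' q'. in_w a b \<longrightarrow> in_w (f a) (f b)) \<and>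
      (\<forall>i<length ps. \<forall>a\<in>Obj ps' q'. \<forall>b\<in>Obj ps' q'. in_v i a b \<longrightarrow> in_v i (f a) (f b))}"

definition NK_act :: "nat list \<Rightarrow> nat list \<Rightarrow> (nat list \<times> nat \<Rightarrow> nat list \<times> nat) \<Rightarrow> (nat list \<times> nat \<Rightarrow> nat list \<times> nat)" where
  "NK_act ps' \<theta> f = restrict (\<lambda>(xs, y). f (xs, \<theta> ! y)) (Obj ps' (length \<theta> - 1))"

definition unit_Delta :: "nat list \<Rightarrow> nat \<Rightarrow> nat list \<Rightarrow> nat \<Rightarrow> (nat list list \<times> nat list)
    \<Rightarrow> (nat list \<times> nat \<Rightarrow> nat list \<times> nat)" where
  "unit_Delta ps q ps' q' s = restrict
     (\<lambda>(xs, y). (map (\<lambda>i. fst s ! i ! (xs ! i)) [0..<length xs], snd s ! y)) (Obj ps' q')"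

end

theory Submission
  imports Defs
begin

text \<open>The unit \<open>\<eta>\<close> has a simplicial retraction \<open>r\<close>, which reads a relative functor
  off its values on the coordinate axes and on the column over the origin. The composite
  \<open>\<eta> \<circ> r\<close> keeps the first coordinates of a relative functor \<open>f\<close> and replaces its last coordinate
  by the one over the origin; as that coordinate can only grow along \<open>w\<close>, there is a natural
  transformation \<open>\<eta> (r f) \<Rightarrow> f\<close>, hence a combinatorial homotopy between \<open>\<eta> \<circ> r\<close> and the
  identity that is stationary on the image of \<open>\<eta>\<close>. Realizing it through the standard
  triangulation of the prisms \<open>[0,1] \<times> \<Delta>\<^sup>k\<close> exhibits \<open>|\<eta>|\<close> as a deformation retract.\<close>

section \<open>Geometric realization\<close>

lemma topspace_real_pre: "topspace (real_pre X) = real_carrier X"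
  by (auto simp: real_pre_def real_carrier_def)

lemma openin_realization:
  "openin (realization X act) U \<longleftrightarrow> U \<subseteq> real_class X act ` real_carrier X \<and>
      openin (real_pre X) {a \<in> real_carrier X. real_class X act a \<in> U}"
proof -
  let ?pre = "\<lambda>U. {a \<in> real_carrier X. real_class X act a \<in> U}"
  have "istopology (\<lambda>U. U \<subseteq> real_class X act ` real_carrier X \<and> openin (real_pre X) (?pre U))"
    unfolding istopology_def
  proof (rule conjI; intro allI impI)
    fix S T
    assume "S \<subseteq> real_class X act ` real_carrier X \<and> openin (real_pre X) (?pre S)"
      and "T \<subseteq> real_class X act ` real_carrier X \<and> openin (real_pre X) (?pre T)"
    moreover have "?pre (S \<inter> T) = ?pre S \<inter> ?pre T" by auto
    ultimately show "S \<inter> T \<subseteq> real_class X act ` real_carrier X \<and> openin (real_pre X) (?pre (S \<inter> T))"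
      by auto
  next
    fix K assume K: "\<forall>S\<in>K. S \<subseteq> real_class X act ` real_carrier X \<and> openin (real_pre X) (?pre S)"
    have "?pre (\<Union>K) = \<Union> (?pre ` K)" by auto
    moreover have "openin (real_pre X) (\<Union> (?pre ` K))"
      using K by (intro openin_Union) blast
    ultimately show "\<Union>K \<subseteq> real_class X act ` real_carrier X \<and> openin (real_pre X) (?pre (\<Union>K))"
      using K by auto
  qed
  then show ?thesis by (simp add: realization_def)
qed

lemma topspace_realization:
  "topspace (realization X act) = real_class X act ` real_carrier X"
proof
  have "{a \<in> real_carrier X. real_class X act a \<in> real_class X act ` real_carrier X} = real_carrier X"
    by auto
  then have "openin (realization X act) (real_class X act ` real_carrier X)"
    unfolding openin_realization using openin_topspace[of "real_pre X"] by (simp add: topspace_real_pre)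
  then show "real_class X act ` real_carrier X \<subseteq> topspace (realization X act)"
    by (rule openin_subset)
  show "topspace (realization X act) \<subseteq> real_class X act ` real_carrier X"
    using openin_topspace[of "realization X act"] unfolding openin_realization by (rule conjunct1)
qed

lemma quotient_map_real_class: "quotient_map (real_pre X) (realization X act) (real_class X act)"
  unfolding quotient_map_def topspace_real_pre topspace_realization openin_realization
  by auto

lemma real_class_self: "a \<in> real_carrier X \<Longrightarrow> a \<in> real_class X act a"
  by (simp add: real_class_def)

lemma real_class_eqI:
  assumes "equivclp (real_rel X act) a b"
  shows "real_class X act a = real_class X act b"
  using assms equivclp_trans equivclp_sym unfolding real_class_def by metis

lemma real_class_act:
  assumes "\<theta> \<in> mono_list k m" "y \<in> X m" "t \<in> standard_simplex k"
  shows "real_class X act (k, act \<theta> y, t) = real_class X act (m, y, simplex_map \<theta> t)"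
  using assms by (intro real_class_eqI r_into_equivclp) (auto simp: real_rel_def)

lemma equivclp_map:
  assumes "\<And>a b. R a b \<Longrightarrow> S (f a) (f b)" and "equivclp R a b"
  shows "equivclp S (f a) (f b)"
  using assms(2) by (induction rule: equivclp_induct) (auto intro: equivclp_into_equivclp assms(1))

lemma equivclp_respects:
  assumes "\<And>a b. R a b \<Longrightarrow> f a = f b" and "equivclp R a b"
  shows "f a = f b"
  using assms(2) by (induction rule: equivclp_induct) (auto dest: assms(1))

definition simplicial_map :: "(nat \<Rightarrow> 'a set) \<Rightarrow> (nat list \<Rightarrow> 'a \<Rightarrow> 'a)
    \<Rightarrow> (nat \<Rightarrow> 'b set) \<Rightarrow> (nat list \<Rightarrow> 'b \<Rightarrow> 'b) \<Rightarrow> (nat \<Rightarrow> 'a \<Rightarrow> 'b) \<Rightarrow> bool" where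
  "simplicial_map X actX Y actY F \<longleftrightarrow> (\<forall>k x. x \<in> X k \<longrightarrow> F k x \<in> Y k) \<and>
     (\<forall>k m \<theta> x. \<theta> \<in> mono_list k m \<longrightarrow> x \<in> X m \<longrightarrow> F k (actX \<theta> x) = actY \<theta> (F m x))"

lemma realize_map_class:
  assumes F: "simplicial_map X actX Y actY F" and a: "(k, x, t) \<in> real_carrier X"
  shows "realize_map Y actY F (real_class X actX (k, x, t)) = real_class Y actY (k, F k x, t)"
proof -
  define Fc :: "nat \<times> _ \<times> (nat \<Rightarrow> real) \<Rightarrow> _" where "Fc = (\<lambda>(k, x, t). (k, F k x, t))"
  have Fc_rel: "real_rel Y actY (Fc a) (Fc b)" if "real_rel X actX a b" for a b
    using that F unfolding real_rel_def simplicial_map_def Fc_def by fastforce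
  let ?c = "real_class X actX (k, x, t)"
  have "(SOME b. b \<in> ?c) \<in> ?c" using real_class_self[OF a] by (rule someI)
  moreover obtain k' x' t' where b: "(SOME b. b \<in> ?c) = (k', x', t')" by (metis prod_cases3)
  ultimately have "equivclp (real_rel X actX) (k, x, t) (k', x', t')"
    unfolding real_class_def by auto
  then have "equivclp (real_rel Y actY) (Fc (k, x, t)) (Fc (k', x', t'))"
    by (rule equivclp_map[where f = Fc, rotated]) (rule Fc_rel)
  then show ?thesis
    unfolding realize_map_def b by (simp add: Fc_def real_class_eqI)
qed

lemma continuous_map_sum_topology:
  assumes "\<And>i. i \<in> I \<Longrightarrow> continuous_map (X i) Z (\<lambda>x. f (i, x))"
  shows "continuous_map (sum_topology X I) Z f"
  unfolding continuous_map_def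
proof (intro conjI allI impI)
  show "f \<in> topspace (sum_topology X I) \<rightarrow> topspace Z"
  proof
    fix p assume "p \<in> topspace (sum_topology X I)"
    then obtain i x where p: "p = (i, x)" "i \<in> I" "x \<in> topspace (X i)" by auto
    show "f p \<in> topspace Z"
      using continuous_map_image_subset_topspace[OF assms[OF p(2)]] p by blast
  qed
next
  fix U assume U: "openin Z U"
  show "openin (sum_topology X I) {x \<in> topspace (sum_topology X I). f x \<in> U}"
    unfolding openin_sum_topology
  proof (intro conjI ballI)
    fix i assume i: "i \<in> I"
    have "{x. (i, x) \<in> {x \<in> topspace (sum_topology X I). f x \<in> U}} = {x \<in> topspace (X i). f (i, x) \<in> U}"
      using i by auto
    then show "openin (X i) {x. (i, x) \<in> {x \<in> topspace (sum_topology X I). f x \<in> U}}"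
      using assms[OF i] U by (simp add: continuous_map_def)
  qed auto
qed

lemma continuous_map_prod_sum_topology:
  assumes "\<And>i. i \<in> I \<Longrightarrow> continuous_map (prod_topology Z (X i)) W (\<lambda>(z, x). f (z, (i, x)))"
  shows "continuous_map (prod_topology Z (sum_topology X I)) W f"
  unfolding continuous_map_def
proof (intro conjI allI impI)
  show "f \<in> topspace (prod_topology Z (sum_topology X I)) \<rightarrow> topspace W"
  proof
    fix p assume "p \<in> topspace (prod_topology Z (sum_topology X I))"
    then obtain z i x where p: "p = (z, i, x)" "i \<in> I" "x \<in> topspace (X i)" "z \<in> topspace Z" by auto
    have "(z, x) \<in> topspace (prod_topology Z (X i))" using p by simp
    then show "f p \<in> topspace W"
      using continuous_map_image_subset_topspace[OF assms[OF p(2)]] p by force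
  qed
next
  fix U assume U: "openin W U"
  show "openin (prod_topology Z (sum_topology X I))
          {x \<in> topspace (prod_topology Z (sum_topology X I)). f x \<in> U}"
    unfolding openin_prod_topology_alt
  proof (intro allI impI)
    fix z p assume zp: "(z, p) \<in> {x \<in> topspace (prod_topology Z (sum_topology X I)). f x \<in> U}"
    obtain i x where p: "p = (i, x)" by (cases p)
    from zp have "(z, (i, x)) \<in> topspace (prod_topology Z (sum_topology X I))" unfolding p by blast
    then have i: "i \<in> I" and x: "x \<in> topspace (X i)" and z: "z \<in> topspace Z" by simp_all
    let ?P = "{q \<in> topspace (prod_topology Z (X i)). (\<lambda>(z, x). f (z, (i, x))) q \<in> U}"
    have "openin (prod_topology Z (X i)) ?P" using openin_continuous_map_preimage[OF assms[OF i] U] by simp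
    moreover have "(z, x) \<in> ?P" using zp p x z by auto
    ultimately have "\<exists>U0 V0. openin Z U0 \<and> openin (X i) V0 \<and> z \<in> U0 \<and> x \<in> V0 \<and> U0 \<times> V0 \<subseteq> ?P"
      by (rule iffD1[OF openin_prod_topology_alt, rule_format])
    then obtain U0 V0 where UV: "openin Z U0" "openin (X i) V0" "z \<in> U0" "x \<in> V0" "U0 \<times> V0 \<subseteq> ?P"
      by blast
    have "openin (sum_topology X I) (Pair i ` V0)"
      unfolding openin_sum_topology
    proof (intro conjI ballI)
      show "Pair i ` V0 \<subseteq> Sigma I (topspace \<circ> X)" using i openin_subset[OF UV(2)] by auto
      fix j assume "j \<in> I"
      have "{x. (j, x) \<in> Pair i ` V0} = (if j = i then V0 else {})" by auto
      then show "openin (X j) {x. (j, x) \<in> Pair i ` V0}" using UV(2) by simp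
    qed
    moreover have "U0 \<times> Pair i ` V0 \<subseteq> {x \<in> topspace (prod_topology Z (sum_topology X I)). f x \<in> U}"
    proof
      fix w assume "w \<in> U0 \<times> Pair i ` V0"
      then obtain z' x' where w: "w = (z', (i, x'))" "z' \<in> U0" "x' \<in> V0" by blast
      then have "(z', x') \<in> ?P" using UV(5) by blast
      then show "w \<in> {x \<in> topspace (prod_topology Z (sum_topology X I)). f x \<in> U}"
        using w(1) i by simp
    qed
    moreover have "p \<in> Pair i ` V0" using p UV(4) by simp
    ultimately show "\<exists>U' V. openin Z U' \<and> openin (sum_topology X I) V \<and> z \<in> U' \<and> p \<in> V \<and>
        U' \<times> V \<subseteq> {x \<in> topspace (prod_topology Z (sum_topology X I)). f x \<in> U}"
      using UV(1,3) by (intro exI[of _ U0] exI[of _ "Pair i ` V0"]) simp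
  qed
qed

lemma prod_discrete_topology_eq_sum_topology:
  "prod_topology (discrete_topology D) T = sum_topology (\<lambda>_. T) D"
proof (rule topology_eq[THEN iffD2], intro allI iffI)
  fix U assume U: "openin (prod_topology (discrete_topology D) T) U"
  have "openin T {t. (x, t) \<in> U}" if x: "x \<in> D" for x
  proof -
    have "continuous_map T (prod_topology (discrete_topology D) T) (\<lambda>t. (x, t))"
      using x by (intro continuous_map_pairedI) auto
    from openin_continuous_map_preimage[OF this U]
    have "openin T {t \<in> topspace T. (x, t) \<in> U}" by simp
    moreover have "{t \<in> topspace T. (x, t) \<in> U} = {t. (x, t) \<in> U}"
      using openin_subset[OF U] by auto
    ultimately show ?thesis by simp
  qed
  then show "openin (sum_topology (\<lambda>_. T) D) U"
    using openin_subset[OF U] by (auto simp: openin_sum_topology)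
next
  fix U assume U: "openin (sum_topology (\<lambda>_. T) D) U"
  have "U = (\<Union>x\<in>D. {x} \<times> {t. (x, t) \<in> U})"
    using openin_subset[OF U] by auto
  moreover have "openin (prod_topology (discrete_topology D) T) ({x} \<times> {t. (x, t) \<in> U})" if "x \<in> D" for x
    using U that by (simp add: openin_sum_topology openin_prod_Times_iff)
  ultimately show "openin (prod_topology (discrete_topology D) T) U"
    by (metis (no_types, lifting) openin_Union imageE)
qed

lemma real_pre_eq_sum_topology:
  "real_pre X = sum_topology (\<lambda>k. sum_topology (\<lambda>_. subtopology (powertop_real UNIV) (standard_simplex k)) (X k)) UNIV"
  by (simp add: real_pre_def prod_discrete_topology_eq_sum_topology)

lemma continuous_map_real_class:
  assumes y: "y \<in> Y k"
  shows "continuous_map (subtopology (powertop_real UNIV) (standard_simplex k)) (realization Y act)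
           (\<lambda>t. real_class Y act (k, y, t))"
proof -
  have "continuous_map (subtopology (powertop_real UNIV) (standard_simplex k)) (real_pre Y) (\<lambda>t. (k, y, t))"
    unfolding real_pre_eq_sum_topology using y
    by (intro continuous_map_compose[OF _ continuous_map_component_injection, unfolded o_def]) auto
  from continuous_map_compose[OF this quotient_imp_continuous_map[OF quotient_map_real_class]]
  show ?thesis by (simp add: o_def)
qed

lemma continuous_map_from_realization:
  assumes "\<And>k x. x \<in> X k \<Longrightarrow> continuous_map (subtopology (powertop_real UNIV) (standard_simplex k)) Z
             (\<lambda>t. g (real_class X act (k, x, t)))"
  shows "continuous_map (realization X act) Z g"
proof (rule continuous_compose_quotient_map[OF quotient_map_real_class])
  show "continuous_map (real_pre X) Z (g \<circ> real_class X act)"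
    unfolding real_pre_eq_sum_topology
    by (intro continuous_map_sum_topology) (use assms in \<open>auto simp: o_def\<close>)
qed

lemma continuous_map_realize_map:
  assumes F: "simplicial_map X actX Y actY F"
  shows "continuous_map (realization X actX) (realization Y actY) (realize_map Y actY F)"
proof (rule continuous_map_from_realization)
  fix k x assume x: "x \<in> X k"
  then have "continuous_map (subtopology (powertop_real UNIV) (standard_simplex k)) (realization Y actY)
           (\<lambda>t. real_class Y actY (k, F k x, t))"
    using F by (intro continuous_map_real_class) (auto simp: simplicial_map_def)
  then show "continuous_map (subtopology (powertop_real UNIV) (standard_simplex k)) (realization Y actY)
           (\<lambda>t. realize_map Y actY F (real_class X actX (k, x, t)))"
    by (rule continuous_map_eq) (use x in \<open>simp add: realize_map_class[OF F] real_carrier_def\<close>)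
qed

section \<open>Deformation retractions are weak homotopy equivalences\<close>

lemma sph_base_in_nsphere: "sph_base \<in> topspace (nsphere k)"
  using in_topspace_nsphere[of k] by (simp add: sph_base_def)

lemma homotopic_with_pointedI:
  assumes h: "continuous_map (prod_topology (top_of_set {0..1::real}) X) Y h"
    and h0: "\<And>x. x \<in> topspace X \<Longrightarrow> h (0, x) = f x"
    and h1: "\<And>x. x \<in> topspace X \<Longrightarrow> h (1, x) = g x"
    and hb: "\<And>t. t \<in> {0..1::real} \<Longrightarrow> h (t, b) = c" and b: "b \<in> topspace X"
  shows "homotopic_with (\<lambda>k. k b = c) X Y f g"
proof -
  define h' where "h' z = (if snd z \<in> topspace X then h z else if fst z = 0 then f (snd z) else g (snd z))" for z
  have "continuous_map (prod_topology (top_of_set {0..1::real}) X) Y h'"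
    by (rule continuous_map_eq[OF h]) (auto simp: h'_def)
  then show ?thesis
    unfolding homotopic_with_def using h0 h1 hb b by (intro exI[of _ h']) (auto simp: h'_def)
qed

lemma homotopic_with_pointed_homotopy_compose:
  assumes H: "continuous_map (prod_topology (top_of_set {0..1::real}) B) B H"
    and H0: "\<And>y. y \<in> topspace B \<Longrightarrow> H (0, y) = y"
    and H1: "\<And>y. y \<in> topspace B \<Longrightarrow> H (1, y) = \<rho> y"
    and Hb: "\<And>s. s \<in> {0..1} \<Longrightarrow> H (s, b) = b"
    and \<beta>: "continuous_map S B \<beta>" "\<beta> p = b" and p: "p \<in> topspace S"
  shows "homotopic_with (\<lambda>h. h p = b) S B \<beta> (\<rho> \<circ> \<beta>)"
proof (rule homotopic_with_pointedI[OF _ _ _ _ p])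
  have "continuous_map (prod_topology (top_of_set {0..1::real}) S)
          (prod_topology (top_of_set {0..1::real}) B) (\<lambda>z. (fst z, \<beta> (snd z)))"
    using continuous_map_compose[OF continuous_map_snd \<beta>(1)]
    unfolding continuous_map_paired by (simp add: o_def continuous_map_fst)
  then show "continuous_map (prod_topology (top_of_set {0..1::real}) S) B (\<lambda>z. H (fst z, \<beta> (snd z)))"
    using continuous_map_compose[OF _ H] by (simp add: o_def)
  fix x assume "x \<in> topspace S"
  then have "\<beta> x \<in> topspace B" using \<beta> continuous_map_image_subset_topspace by blast
  then show "H (fst (0, x), \<beta> (snd (0, x))) = \<beta> x" "H (fst (1, x), \<beta> (snd (1, x))) = (\<rho> \<circ> \<beta>) x"
    using H0 H1 by simp_all
qed (use \<beta> Hb in simp)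

lemma weak_homotopy_equivalence_if_deformation_retract:
  assumes g: "continuous_map A B g" and r: "continuous_map B A r"
    and rg: "\<And>x. x \<in> topspace A \<Longrightarrow> r (g x) = x"
    and H: "continuous_map (prod_topology (top_of_set {0..1::real}) B) B H"
    and H0: "\<And>y. y \<in> topspace B \<Longrightarrow> H (0, y) = y"
    and H1: "\<And>y. y \<in> topspace B \<Longrightarrow> H (1, y) = g (r y)"
    and H_fix: "\<And>x s. x \<in> topspace A \<Longrightarrow> s \<in> {0..1} \<Longrightarrow> H (s, g x) = g x"
  shows "weak_homotopy_equivalence A B g"
  unfolding weak_homotopy_equivalence_def
proof (intro conjI allI ballI impI)
  fix k x0 \<beta> assume x0: "x0 \<in> topspace A"
    and \<beta>: "continuous_map (nsphere k) B \<beta> \<and> \<beta> sph_base = g x0"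
  have "homotopic_with (\<lambda>h. h sph_base = g x0) (nsphere k) B \<beta> ((g \<circ> r) \<circ> \<beta>)"
    by (rule homotopic_with_pointed_homotopy_compose[OF H H0 _ _ conjunct1[OF \<beta>] conjunct2[OF \<beta>]
          sph_base_in_nsphere]) (simp_all add: H1 H_fix[OF x0])
  then have "homotopic_with (\<lambda>h. h sph_base = g x0) (nsphere k) B (g \<circ> (r \<circ> \<beta>)) \<beta>"
    by (simp add: homotopic_with_sym o_assoc)
  moreover have "continuous_map (nsphere k) A (r \<circ> \<beta>)"
    using \<beta> r by (intro continuous_map_compose) auto
  moreover have "(r \<circ> \<beta>) sph_base = x0" using \<beta> rg[OF x0] by simp
  ultimately show "\<exists>\<alpha>. continuous_map (nsphere k) A \<alpha> \<and> \<alpha> sph_base = x0 \<and>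
      homotopic_with (\<lambda>h. h sph_base = g x0) (nsphere k) B (g \<circ> \<alpha>) \<beta>"
    by blast
next
  fix k x0 \<alpha>1 \<alpha>2 assume x0: "x0 \<in> topspace A"
    and \<alpha>: "continuous_map (nsphere k) A \<alpha>1 \<and> \<alpha>1 sph_base = x0 \<and>
       continuous_map (nsphere k) A \<alpha>2 \<and> \<alpha>2 sph_base = x0 \<and>
       homotopic_with (\<lambda>h. h sph_base = g x0) (nsphere k) B (g \<circ> \<alpha>1) (g \<circ> \<alpha>2)"
  then obtain h where h: "continuous_map (prod_topology (top_of_set {0..1::real}) (nsphere k)) B h"
    "\<And>x. h (0, x) = (g \<circ> \<alpha>1) x" "\<And>x. h (1, x) = (g \<circ> \<alpha>2) x"
    "\<And>t. t \<in> {0..1::real} \<Longrightarrow> h (t, sph_base) = g x0"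
    unfolding homotopic_with_def by blast
  \<comment> \<open>push the homotopy of the images back along the retraction\<close>
  show "homotopic_with (\<lambda>h. h sph_base = x0) (nsphere k) A \<alpha>1 \<alpha>2"
  proof (rule homotopic_with_pointedI[OF continuous_map_compose[OF h(1) r] _ _ _ sph_base_in_nsphere])
    fix x assume "x \<in> topspace (nsphere k)"
    then have "\<alpha>1 x \<in> topspace A" "\<alpha>2 x \<in> topspace A"
      using \<alpha> continuous_map_image_subset_topspace by blast+
    then show "(r \<circ> h) (0, x) = \<alpha>1 x" "(r \<circ> h) (1, x) = \<alpha>2 x"
      using h(2,3) rg by simp_all
  qed (use h(4) rg[OF x0] in simp)
qed (rule g)

section \<open>Monotone maps and the standard simplex\<close>

lemma mono_listD:
  assumes "\<theta> \<in> mono_list k m"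
  shows "length \<theta> = Suc k" "\<And>i. i \<le> k \<Longrightarrow> \<theta> ! i \<le> m"
    "\<And>i j. i \<le> j \<Longrightarrow> j \<le> k \<Longrightarrow> \<theta> ! i \<le> \<theta> ! j"
  using assms unfolding mono_list_def
  by (auto simp: sorted_iff_nth_mono less_Suc_eq_le)

lemma mono_listI:
  assumes "length \<theta> = Suc k" "\<And>i. i \<le> k \<Longrightarrow> \<theta> ! i \<le> m"
    "\<And>i j. i \<le> j \<Longrightarrow> j \<le> k \<Longrightarrow> \<theta> ! i \<le> \<theta> ! j"
  shows "\<theta> \<in> mono_list k m"
  using assms unfolding mono_list_def
  by (auto simp: sorted_iff_nth_mono less_Suc_eq_le in_set_conv_nth)

lemma map_upt_in_mono_list:
  assumes "\<And>i. i \<le> k \<Longrightarrow> F i \<le> m" "\<And>i j. i \<le> j \<Longrightarrow> j \<le> k \<Longrightarrow> F i \<le> F j"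
  shows "map F [0..<Suc k] \<in> mono_list k m"
  by (rule mono_listI) (use assms in \<open>auto simp del: upt_Suc simp: nth_append\<close>)

definition cumulative :: "(nat \<Rightarrow> real) \<Rightarrow> nat \<Rightarrow> real" where
  "cumulative t j = sum t {..<j}"

text \<open>Cutting the weight of vertex \<open>j\<close> of \<open>t\<close> at height \<open>\<sigma>\<close> gives the point of
  \<open>\<Delta>\<^sup>k\<^sup>+\<^sup>1\<close> that parametrizes \<open>(\<sigma>, t)\<close> in the \<open>j\<close>-th simplex of the standard
  triangulation of the prism \<open>[0,1] \<times> \<Delta>\<^sup>k\<close>.\<close>
definition prism_coords :: "nat \<Rightarrow> (nat \<Rightarrow> real) \<Rightarrow> real \<Rightarrow> nat \<Rightarrow> real" where
  "prism_coords j t \<sigma> l = (if l < j then t l else if l = j then \<sigma> - cumulative t j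
      else if l = Suc j then cumulative t (Suc j) - \<sigma> else t (l - 1))"

definition insert_zero :: "nat \<Rightarrow> (nat \<Rightarrow> real) \<Rightarrow> nat \<Rightarrow> real" where
  "insert_zero p t l = (if l < p then t l else if l = p then 0 else t (l - 1))"

definition coface_list :: "nat \<Rightarrow> nat \<Rightarrow> nat list" where
  "coface_list p k = map (\<lambda>l. if l < p then l else Suc l) [0..<Suc k]"

definition codegeneracy_list :: "nat \<Rightarrow> nat \<Rightarrow> nat list" where
  "codegeneracy_list j k = map (\<lambda>l. if l \<le> j then l else l - 1) [0..<Suc (Suc k)]"

definition prism_lift :: "nat list \<Rightarrow> nat \<Rightarrow> nat \<Rightarrow> nat list" where
  "prism_lift \<theta> j k = map (\<lambda>l. if l \<le> j then \<theta> ! l else Suc (\<theta> ! (l - 1))) [0..<Suc (Suc k)]"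

lemma standard_simplexD:
  assumes "t \<in> standard_simplex k"
  shows "\<And>i. 0 \<le> t i" "\<And>i. t i \<le> 1" "\<And>i. k < i \<Longrightarrow> t i = 0" "sum t {..k} = 1"
  using assms by (auto simp: standard_simplex_def)

lemma standard_simplexI:
  assumes "\<And>i. 0 \<le> t i" "\<And>i. t i \<le> 1" "\<And>i. k < i \<Longrightarrow> t i = 0" "sum t {..k} = 1"
  shows "t \<in> standard_simplex k"
  using assms by (auto simp: standard_simplex_def)

lemma simplex_map_map_upt: "simplex_map (map F [0..<n]) t p = sum t {i. i < n \<and> F i = p}"
  unfolding simplex_map_def by (rule sum.cong) auto

lemma cumulative_Suc: "cumulative t (Suc j) = cumulative t j + t j"
  by (simp add: cumulative_def)

lemma cumulative_0: "cumulative t 0 = 0" by (simp add: cumulative_def)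

lemma cumulative_total: "t \<in> standard_simplex k \<Longrightarrow> cumulative t (Suc k) = 1"
  using standard_simplexD(4) by (simp add: cumulative_def lessThan_Suc_atMost)

lemma cumulative_mono: "t \<in> standard_simplex k \<Longrightarrow> i \<le> j \<Longrightarrow> cumulative t i \<le> cumulative t j"
  unfolding cumulative_def by (rule sum_mono2) (auto intro: standard_simplexD(1))

lemma cumulative_inject:
  assumes "\<And>l. cumulative u l = cumulative v l"
  shows "u = v"
proof
  fix l show "u l = v l" using assms[of "Suc l"] assms[of l] by (simp add: cumulative_Suc)
qed

lemma cumulative_prism_coords:
  "cumulative (prism_coords j t \<sigma>) l =
     (if l \<le> j then cumulative t l else if l = Suc j then \<sigma> else cumulative t (l - 1))"
proof (induction l)
  case (Suc l)
  have "cumulative t l = cumulative t (l - 1) + t (l - 1)" if "0 < l"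
    using that by (cases l) (simp_all add: cumulative_Suc)
  with Suc show ?case by (auto simp: cumulative_Suc prism_coords_def)
qed (simp add: cumulative_0)

lemma coface_list_in_mono_list: "p \<le> Suc k \<Longrightarrow> coface_list p k \<in> mono_list k (Suc k)"
  unfolding coface_list_def by (rule map_upt_in_mono_list) auto

lemma coface_list_nth: "l \<le> k \<Longrightarrow> coface_list p k ! l = (if l < p then l else Suc l)"
  unfolding coface_list_def by (simp del: upt_Suc add: less_Suc_eq_le)

lemma simplex_map_coface_list:
  assumes t: "\<And>i. k < i \<Longrightarrow> t i = 0" and p: "p \<le> Suc k"
  shows "simplex_map (coface_list p k) t = insert_zero p t"
proof
  fix l
  have "simplex_map (coface_list p k) t l = sum t {i. i < Suc k \<and> (if i < p then i else Suc i) = l}"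
    unfolding coface_list_def simplex_map_map_upt ..
  also have "\<dots> = insert_zero p t l"
  proof (cases "l < p")
    case True
    then have "{i. i < Suc k \<and> (if i < p then i else Suc i) = l} = {l}" using p by auto
    then show ?thesis using True by (simp add: insert_zero_def)
  next
    case False
    show ?thesis
    proof (cases "l = p")
      case True
      then have "{i. i < Suc k \<and> (if i < p then i else Suc i) = l} = {}" by auto
      then show ?thesis using True by (simp add: insert_zero_def)
    next
      case False2: False
      show ?thesis
      proof (cases "l - 1 \<le> k")
        case True
        then have "{i. i < Suc k \<and> (if i < p then i else Suc i) = l} = {l - 1}" using False False2 by auto
        then show ?thesis using False False2 by (simp add: insert_zero_def)
      next
        case False3: False
        have E: "{i. i < Suc k \<and> (if i < p then i else Suc i) = l} = {}" using False False2 False3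
          by (auto split: if_split_asm)
        show ?thesis unfolding E using False False2 False3 t[of "l - 1"] by (simp add: insert_zero_def)
      qed
    qed
  qed
  finally show "simplex_map (coface_list p k) t l = insert_zero p t l" .
qed

lemma prism_coords_0: "prism_coords 0 t 0 = insert_zero 0 t"
  by (rule ext) (simp add: prism_coords_def insert_zero_def cumulative_def)

lemma prism_coords_at_vertex:
  assumes "\<sigma> = cumulative t (Suc i)"
  shows "prism_coords i t \<sigma> = insert_zero (Suc i) t" "prism_coords (Suc i) t \<sigma> = insert_zero (Suc i) t"
  using assms by (auto simp: prism_coords_def insert_zero_def cumulative_Suc less_Suc_eq intro!: ext)

lemma prism_coords_in_standard_simplex:
  assumes t: "t \<in> standard_simplex k" and j: "j \<le> k" and s1: "cumulative t j \<le> \<sigma>" and s2: "\<sigma> \<le> cumulative t (Suc j)"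
  shows "prism_coords j t \<sigma> \<in> standard_simplex (Suc k)"
proof (rule standard_simplexI)
  have Lj: "0 \<le> cumulative t j" unfolding cumulative_def by (rule sum_nonneg) (use standard_simplexD(1)[OF t] in auto)
  have L1: "cumulative t (Suc j) \<le> 1" using cumulative_mono[OF t, of "Suc j" "Suc k"] j cumulative_total[OF t] by simp
  fix i
  show "0 \<le> prism_coords j t \<sigma> i" using standard_simplexD(1)[OF t] s1 s2 by (simp add: prism_coords_def)
  show "prism_coords j t \<sigma> i \<le> 1" using standard_simplexD(2)[OF t] s1 s2 Lj L1 by (simp add: prism_coords_def)
next
  fix i assume "Suc k < i"
  then show "prism_coords j t \<sigma> i = 0" using j standard_simplexD(3)[OF t, of "i - 1"] by (simp add: prism_coords_def)
next
  have "sum (prism_coords j t \<sigma>) {..Suc k} = cumulative (prism_coords j t \<sigma>) (Suc (Suc k))"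
    by (simp add: cumulative_def lessThan_Suc_atMost)
  also have "\<dots> = 1"
    using j cumulative_total[OF t] by (simp add: cumulative_prism_coords)
  finally show "sum (prism_coords j t \<sigma>) {..Suc k} = 1" .
qed

lemma upt_in_mono_list: "j \<le> m \<Longrightarrow> [0..<Suc j] \<in> mono_list j m"
  using map_upt_in_mono_list[of j id m] by (simp add: map_idI)

lemma simplex_map_upt:
  assumes "\<And>i. j < i \<Longrightarrow> t i = 0"
  shows "simplex_map [0..<Suc j] t = t"
proof
  fix l
  have "simplex_map [0..<Suc j] t l = sum t {i. i < Suc j \<and> i = l}"
    using simplex_map_map_upt[of id "Suc j" t l] by (simp add: map_idI)
  also have "\<dots> = t l"
    using assms[of l] by (cases "l < Suc j") (auto simp: Collect_conj_eq)
  finally show "simplex_map [0..<Suc j] t l = t l" .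
qed

lemma standard_simplex_truncate:
  assumes t: "t \<in> standard_simplex m" and z: "\<And>i. j < i \<Longrightarrow> t i = 0" and j: "j \<le> m"
  shows "t \<in> standard_simplex j"
proof (rule standard_simplexI)
  have "{..m} = {..j} \<union> {Suc j..m}" using j by auto
  moreover have "sum t ({..j} \<union> {Suc j..m}) = sum t {..j} + sum t {Suc j..m}"
    by (rule sum.union_disjoint) auto
  ultimately have "sum t {..m} = sum t {..j} + sum t {Suc j..m}" by simp
  moreover have "sum t {Suc j..m} = 0" using z by (intro sum.neutral) auto
  ultimately show "sum t {..j} = 1" using standard_simplexD(4)[OF t] by simp
qed (use standard_simplexD[OF t] z in auto)

lemma codegeneracy_list_in_mono_list: "j \<le> k \<Longrightarrow> codegeneracy_list j k \<in> mono_list (Suc k) k"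
  unfolding codegeneracy_list_def by (rule map_upt_in_mono_list) auto

lemma codegeneracy_list_nth: "l \<le> Suc k \<Longrightarrow> codegeneracy_list j k ! l = (if l \<le> j then l else l - 1)"
  unfolding codegeneracy_list_def by (simp del: upt_Suc add: less_Suc_eq_le)

lemma simplex_map_codegeneracy_list:
  assumes t: "t \<in> standard_simplex k" and j: "j \<le> k"
  shows "simplex_map (codegeneracy_list j k) (prism_coords j t \<sigma>) = t"
proof
  fix p
  have "simplex_map (codegeneracy_list j k) (prism_coords j t \<sigma>) p = sum (prism_coords j t \<sigma>) {l. l < Suc (Suc k) \<and> (if l \<le> j then l else l - 1) = p}"
    unfolding codegeneracy_list_def simplex_map_map_upt ..
  also have "\<dots> = t p"
  proof (cases "p < j")
    case True
    then have "{l. l < Suc (Suc k) \<and> (if l \<le> j then l else l - 1) = p} = {p}" using j by auto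
    then show ?thesis using True by (simp add: prism_coords_def)
  next
    case False
    show ?thesis
    proof (cases "p = j")
      case True
      then have "{l. l < Suc (Suc k) \<and> (if l \<le> j then l else l - 1) = p} = {j, Suc j}" using j by auto
      then show ?thesis using True by (simp add: prism_coords_def cumulative_Suc)
    next
      case False2: False
      show ?thesis
      proof (cases "p \<le> k")
        case True
        then have "{l. l < Suc (Suc k) \<and> (if l \<le> j then l else l - 1) = p} = {Suc p}" using False False2 by auto
        then show ?thesis using False False2 by (simp add: prism_coords_def)
      next
        case False3: False
        have E: "{l. l < Suc (Suc k) \<and> (if l \<le> j then l else l - 1) = p} = {}" using False False2 False3 j by auto
        show ?thesis unfolding E using standard_simplexD(3)[OF t, of p] False3 by simp
      qed
    qed
  qed
  finally show "simplex_map (codegeneracy_list j k) (prism_coords j t \<sigma>) p = t p" .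
qed

lemma prism_coords_full:
  assumes t: "t \<in> standard_simplex k" and j: "j \<le> k" and s: "1 \<le> cumulative t (Suc j)"
  shows "\<And>i. j < i \<Longrightarrow> t i = 0" "prism_coords j t 1 = t"
proof -
  have L1: "cumulative t (Suc j) = 1" using cumulative_mono[OF t, of "Suc j" "Suc k"] j cumulative_total[OF t] s by simp
  have "{..<Suc k} = {..<Suc j} \<union> {Suc j..k}" using j by auto
  moreover have "sum t ({..<Suc j} \<union> {Suc j..k}) = sum t {..<Suc j} + sum t {Suc j..k}"
    by (rule sum.union_disjoint) auto
  ultimately have "cumulative t (Suc k) = cumulative t (Suc j) + sum t {Suc j..k}" by (simp add: cumulative_def)
  then have S0: "sum t {Suc j..k} = 0" using L1 cumulative_total[OF t] by simp
  have Z: "t i = 0" if "j < i" for i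
  proof (cases "i \<le> k")
    case True
    then show ?thesis using S0 sum_nonneg_eq_0_iff[of "{Suc j..k}" t] standard_simplexD(1)[OF t] that by auto
  next
    case False then show ?thesis using standard_simplexD(3)[OF t] by simp
  qed
  show "\<And>i. j < i \<Longrightarrow> t i = 0" by (rule Z)
  show "prism_coords j t 1 = t"
  proof
    fix l
    show "prism_coords j t 1 l = t l"
      using Z[of l] Z[of "l - 1"] L1 by (auto simp: prism_coords_def cumulative_Suc)
  qed
qed

lemma prism_lift_nth: "l \<le> Suc k \<Longrightarrow> prism_lift \<theta> j k ! l = (if l \<le> j then \<theta> ! l else Suc (\<theta> ! (l - 1)))"
  unfolding prism_lift_def by (simp del: upt_Suc add: less_Suc_eq_le)

lemma prism_lift_in_mono_list:
  assumes th: "\<theta> \<in> mono_list k m" and j: "j \<le> k"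
  shows "prism_lift \<theta> j k \<in> mono_list (Suc k) (Suc m)"
  unfolding prism_lift_def
proof (rule map_upt_in_mono_list)
  note M = mono_listD[OF th]
  fix i assume "i \<le> Suc k"
  then show "(if i \<le> j then \<theta> ! i else Suc (\<theta> ! (i - 1))) \<le> Suc m"
    using M(2)[of i] M(2)[of "i - 1"] j by auto
next
  note M = mono_listD[OF th]
  fix i i' assume ii: "i \<le> i'" "i' \<le> Suc k"
  show "(if i \<le> j then \<theta> ! i else Suc (\<theta> ! (i - 1))) \<le> (if i' \<le> j then \<theta> ! i' else Suc (\<theta> ! (i' - 1)))"
  proof (cases "i' \<le> j")
    case True then show ?thesis using ii M(3)[of i i'] j by auto
  next
    case False
    show ?thesis
    proof (cases "i \<le> j")
      case True
      then have "\<theta> ! i \<le> \<theta> ! (i' - 1)" using M(3)[of i "i' - 1"] ii False by auto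
      then show ?thesis using True False by simp
    next
      case False2: False
      then show ?thesis using False M(3)[of "i - 1" "i' - 1"] ii by auto
    qed
  qed
qed

lemma cumulative_simplex_map:
  assumes th: "\<theta> \<in> mono_list k m"
  shows "cumulative (simplex_map \<theta> t) P = sum t {i. i < Suc k \<and> \<theta> ! i < P}"
proof -
  have L: "length \<theta> = Suc k" using mono_listD(1)[OF th] .
  have "cumulative (simplex_map \<theta> t) P = (\<Sum>p<P. sum t {i. i \<in> {i. i < Suc k \<and> \<theta> ! i < P} \<and> \<theta> ! i = p})"
    unfolding cumulative_def simplex_map_def L
  proof (rule sum.cong)
    fix p assume "p \<in> {..<P}"
    then have "{i. i < Suc k \<and> \<theta> ! i = p} = {i. i \<in> {i. i < Suc k \<and> \<theta> ! i < P} \<and> \<theta> ! i = p}" by auto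
    then show "sum t {i. i < Suc k \<and> \<theta> ! i = p} = sum t {i. i \<in> {i. i < Suc k \<and> \<theta> ! i < P} \<and> \<theta> ! i = p}"
      by simp
  qed simp
  also have "\<dots> = sum t {i. i < Suc k \<and> \<theta> ! i < P}"
    by (rule sum.group) auto
  finally show ?thesis .
qed

lemma prism_lift_bounds:
  assumes \<theta>: "\<theta> \<in> mono_list k m" and t: "t \<in> standard_simplex k" and j: "j \<le> k"
    and \<sigma>: "cumulative t j \<le> \<sigma>" "\<sigma> \<le> cumulative t (Suc j)"
  shows "cumulative (simplex_map \<theta> t) (\<theta> ! j) \<le> \<sigma>" "\<sigma> \<le> cumulative (simplex_map \<theta> t) (Suc (\<theta> ! j))"
proof -
  note M = mono_listD[OF \<theta>]
  have low: "{i. i < Suc k \<and> \<theta> ! i < \<theta> ! j} \<subseteq> {..<j}"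
  proof
    fix i assume "i \<in> {i. i < Suc k \<and> \<theta> ! i < \<theta> ! j}"
    then show "i \<in> {..<j}" using M(3)[of j i] by (cases "j \<le> i") auto
  qed
  have "sum t {i. i < Suc k \<and> \<theta> ! i < \<theta> ! j} \<le> cumulative t j"
    unfolding cumulative_def by (rule sum_mono2[OF _ low]) (auto intro: standard_simplexD(1)[OF t])
  then show "cumulative (simplex_map \<theta> t) (\<theta> ! j) \<le> \<sigma>"
    using \<sigma> by (simp add: cumulative_simplex_map[OF \<theta>])
  have high: "{..<Suc j} \<subseteq> {i. i < Suc k \<and> \<theta> ! i < Suc (\<theta> ! j)}"
    using M(3) j by (auto simp: less_Suc_eq_le)
  have "cumulative t (Suc j) \<le> sum t {i. i < Suc k \<and> \<theta> ! i < Suc (\<theta> ! j)}"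
    unfolding cumulative_def by (rule sum_mono2[OF _ high]) (auto intro: standard_simplexD(1)[OF t])
  then show "\<sigma> \<le> cumulative (simplex_map \<theta> t) (Suc (\<theta> ! j))"
    using \<sigma> by (simp add: cumulative_simplex_map[OF \<theta>])
qed

lemma prism_lift_nth_low: "l \<le> j \<Longrightarrow> j \<le> k \<Longrightarrow> prism_lift \<theta> j k ! l = \<theta> ! l"
  using prism_lift_nth[of l k \<theta> j] by simp

lemma prism_lift_nth_high: "j < l \<Longrightarrow> l \<le> Suc k \<Longrightarrow> prism_lift \<theta> j k ! l = Suc (\<theta> ! (l - 1))"
  using prism_lift_nth[of l k \<theta> j] by simp

lemma prism_lift_sublevel_low:
  assumes \<theta>: "\<theta> \<in> mono_list k m" and j: "j \<le> k" and Q: "Q \<le> \<theta> ! j"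
  shows "{i. i < Suc k \<and> \<theta> ! i < Q} \<subseteq> {..<j}"
    and "{l. l < Suc (Suc k) \<and> prism_lift \<theta> j k ! l < Q} = {i. i < Suc k \<and> \<theta> ! i < Q}"
proof -
  note M = mono_listD(3)[OF \<theta>]
  show low: "{i. i < Suc k \<and> \<theta> ! i < Q} \<subseteq> {..<j}"
  proof
    fix i assume "i \<in> {i. i < Suc k \<and> \<theta> ! i < Q}"
    then show "i \<in> {..<j}" using Q M[of j i] by (cases "j \<le> i") auto
  qed
  show "{l. l < Suc (Suc k) \<and> prism_lift \<theta> j k ! l < Q} = {i. i < Suc k \<and> \<theta> ! i < Q}"
  proof (intro Set.set_eqI iffI)
    fix l assume l: "l \<in> {l. l < Suc (Suc k) \<and> prism_lift \<theta> j k ! l < Q}"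
    show "l \<in> {i. i < Suc k \<and> \<theta> ! i < Q}"
    proof (cases "l \<le> j")
      case False
      then have "\<theta> ! j \<le> \<theta> ! (l - 1)" using l by (intro M) auto
      then show ?thesis using l prism_lift_nth_high[of j l k \<theta>] False Q by auto
    qed (use l j prism_lift_nth_low in auto)
  next
    fix i assume "i \<in> {i. i < Suc k \<and> \<theta> ! i < Q}"
    then show "i \<in> {l. l < Suc (Suc k) \<and> prism_lift \<theta> j k ! l < Q}"
      using low j prism_lift_nth_low[of i j k \<theta>] by auto
  qed
qed

lemma prism_lift_sublevel_mid:
  assumes \<theta>: "\<theta> \<in> mono_list k m" and j: "j \<le> k"
  shows "{l. l < Suc (Suc k) \<and> prism_lift \<theta> j k ! l < Suc (\<theta> ! j)} = {..<Suc j}"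
proof (intro Set.set_eqI iffI)
  note M = mono_listD(3)[OF \<theta>]
  fix l assume l: "l \<in> {l. l < Suc (Suc k) \<and> prism_lift \<theta> j k ! l < Suc (\<theta> ! j)}"
  show "l \<in> {..<Suc j}"
  proof (rule ccontr)
    assume "l \<notin> {..<Suc j}"
    then have jl: "j < l" "l \<le> Suc k" using l by auto
    then have "\<theta> ! j \<le> \<theta> ! (l - 1)" by (intro M) auto
    then show False using l prism_lift_nth_high[OF jl] by simp
  qed
next
  fix l assume "l \<in> {..<Suc j}"
  then show "l \<in> {l. l < Suc (Suc k) \<and> prism_lift \<theta> j k ! l < Suc (\<theta> ! j)}"
    using j mono_listD(3)[OF \<theta>, of l j] prism_lift_nth_low[of l j k \<theta>] by auto
qed

lemma prism_lift_sublevel_high: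
  assumes \<theta>: "\<theta> \<in> mono_list k m" and j: "j \<le> k" and Q: "Suc (\<theta> ! j) < Q"
  defines "B \<equiv> {i. j < i \<and> i < Suc k \<and> \<theta> ! i < Q - 1}"
  shows "{l. l < Suc (Suc k) \<and> prism_lift \<theta> j k ! l < Q} = {..<Suc (Suc j)} \<union> Suc ` B"
    and "{i. i < Suc k \<and> \<theta> ! i < Q - 1} = {..<Suc j} \<union> B"
proof -
  have below: "\<theta> ! i < Q - 1" if "i \<le> j" for i
    using mono_listD(3)[OF \<theta> that j] Q by simp
  show "{l. l < Suc (Suc k) \<and> prism_lift \<theta> j k ! l < Q} = {..<Suc (Suc j)} \<union> Suc ` B"
  proof (intro Set.set_eqI iffI)
    fix l assume l: "l \<in> {l. l < Suc (Suc k) \<and> prism_lift \<theta> j k ! l < Q}"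
    show "l \<in> {..<Suc (Suc j)} \<union> Suc ` B"
    proof (cases "l < Suc (Suc j)")
      case False
      then obtain i where "l = Suc i" "j < i" by (cases l) auto
      then show ?thesis using l prism_lift_nth_high[of j l k \<theta>] by (auto simp: B_def)
    qed simp
  next
    fix l assume "l \<in> {..<Suc (Suc j)} \<union> Suc ` B"
    then consider "l \<le> j" | "l = Suc j" | i where "l = Suc i" "i \<in> B"
      by (auto simp: less_Suc_eq)
    then show "l \<in> {l. l < Suc (Suc k) \<and> prism_lift \<theta> j k ! l < Q}"
    proof cases
      case 1
      then show ?thesis using j below[of l] prism_lift_nth_low[of l j k \<theta>] by auto
    next
      case 2
      then show ?thesis using Q j prism_lift_nth_high[of j l k \<theta>] by auto
    next
      case 3
      then show ?thesis using prism_lift_nth_high[of j l k \<theta>] by (auto simp: B_def)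
    qed
  qed
  show "{i. i < Suc k \<and> \<theta> ! i < Q - 1} = {..<Suc j} \<union> B"
    using j below by (auto simp: B_def less_Suc_eq_le)
qed

text \<open>Both sides are compared through their partial sums, i.e. through the sublevel sets of
  \<open>prism_lift \<theta> j k\<close> and \<open>\<theta>\<close> computed above.\<close>
lemma simplex_map_prism_lift:
  assumes \<theta>: "\<theta> \<in> mono_list k m" and j: "j \<le> k"
  shows "simplex_map (prism_lift \<theta> j k) (prism_coords j t \<sigma>) = prism_coords (\<theta> ! j) (simplex_map \<theta> t) \<sigma>"
proof (rule cumulative_inject)
  fix Q
  let ?S = "\<lambda>Q. {i. i < Suc k \<and> \<theta> ! i < Q}"
  let ?L = "{l. l < Suc (Suc k) \<and> prism_lift \<theta> j k ! l < Q}"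
  let ?w = "prism_coords j t \<sigma>"
  have "cumulative (simplex_map (prism_lift \<theta> j k) ?w) Q = sum ?w ?L"
    by (rule cumulative_simplex_map[OF prism_lift_in_mono_list[OF \<theta> j]])
  also have "\<dots> = cumulative (prism_coords (\<theta> ! j) (simplex_map \<theta> t) \<sigma>) Q"
  proof -
    consider "Q \<le> \<theta> ! j" | "Q = Suc (\<theta> ! j)" | "Suc (\<theta> ! j) < Q" by linarith
    then show ?thesis
    proof cases
      case 1
      note low = prism_lift_sublevel_low[OF \<theta> j 1]
      have "sum ?w (?S Q) = sum t (?S Q)"
        using low(1) by (intro sum.cong) (auto simp: prism_coords_def)
      then show ?thesis
        using 1 low(2) by (simp add: cumulative_prism_coords cumulative_simplex_map[OF \<theta>])
    next
      case 2
      then show ?thesis using j prism_lift_sublevel_mid[OF \<theta> j]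
        by (simp add: cumulative_prism_coords flip: cumulative_def)
    next
      case 3
      define B where "B = {i. j < i \<and> i < Suc k \<and> \<theta> ! i < Q - 1}"
      note high = prism_lift_sublevel_high[OF \<theta> j 3, folded B_def]
      have "sum ?w ?L = cumulative ?w (Suc (Suc j)) + sum (?w \<circ> Suc) B"
        unfolding high(1) cumulative_def by (subst sum.union_disjoint) (auto simp: B_def sum.reindex)
      also have "\<dots> = cumulative t (Suc j) + sum t B"
        by (simp add: cumulative_prism_coords B_def prism_coords_def)
      also have "\<dots> = sum t (?S (Q - 1))"
        unfolding high(2) cumulative_def by (subst sum.union_disjoint) (auto simp: B_def)
      finally show ?thesis
        using 3 by (simp add: cumulative_prism_coords cumulative_simplex_map[OF \<theta>])
    qed
  qed
  finally show "cumulative (simplex_map (prism_lift \<theta> j k) ?w) Q =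
    cumulative (prism_coords (\<theta> ! j) (simplex_map \<theta> t) \<sigma>) Q" .
qed

lemma simplex_map_in_standard_simplex:
  assumes th: "\<theta> \<in> mono_list k m" and t: "t \<in> standard_simplex k"
  shows "simplex_map \<theta> t \<in> standard_simplex m"
proof -
  note M = mono_listD[OF th]
  have up: "simplex_map \<theta> t p = sum t {i. i < Suc k \<and> \<theta> ! i = p}" for p
    using M(1) by (simp add: simplex_map_def)
  show ?thesis
  proof (rule standard_simplexI)
    fix p
    show "0 \<le> simplex_map \<theta> t p" unfolding up by (rule sum_nonneg) (use standard_simplexD(1)[OF t] in auto)
    have "sum t {i. i < Suc k \<and> \<theta> ! i = p} \<le> sum t {..k}"
      by (rule sum_mono2) (use standard_simplexD(1)[OF t] in auto)
    then show "simplex_map \<theta> t p \<le> 1" unfolding up using standard_simplexD(4)[OF t] by simp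
  next
    fix p assume p: "m < p"
    have E: "{i. i < Suc k \<and> \<theta> ! i = p} = {}" using M(2) p by (auto simp: less_Suc_eq_le) (metis not_le)
    show "simplex_map \<theta> t p = 0" unfolding up E by simp
  next
    have "sum (simplex_map \<theta> t) {..m} = cumulative (simplex_map \<theta> t) (Suc m)"
      by (simp add: cumulative_def lessThan_Suc_atMost)
    also have "\<dots> = sum t {i. i < Suc k \<and> \<theta> ! i < Suc m}" by (rule cumulative_simplex_map[OF th])
    also have "{i. i < Suc k \<and> \<theta> ! i < Suc m} = {..k}"
      using M(2) by (auto simp: less_Suc_eq_le)
    finally show "sum (simplex_map \<theta> t) {..m} = 1" using standard_simplexD(4)[OF t] by simp
  qed
qed

definition prism_index :: "(nat \<Rightarrow> real) \<Rightarrow> real \<Rightarrow> nat" where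
  "prism_index t \<sigma> = (LEAST j. \<sigma> \<le> cumulative t (Suc j))"

lemma prism_index_bounds:
  assumes t: "t \<in> standard_simplex k" and s0: "0 \<le> \<sigma>" and s1: "\<sigma> \<le> 1"
  shows "prism_index t \<sigma> \<le> k" "cumulative t (prism_index t \<sigma>) \<le> \<sigma>" "\<sigma> \<le> cumulative t (Suc (prism_index t \<sigma>))"
proof -
  have ex: "\<sigma> \<le> cumulative t (Suc k)" using cumulative_total[OF t] s1 by simp
  show "prism_index t \<sigma> \<le> k" unfolding prism_index_def by (rule Least_le) (rule ex)
  show "\<sigma> \<le> cumulative t (Suc (prism_index t \<sigma>))" unfolding prism_index_def by (rule LeastI) (rule ex)
  show "cumulative t (prism_index t \<sigma>) \<le> \<sigma>"
  proof (cases "prism_index t \<sigma>")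
    case 0 then show ?thesis using s0 by (simp add: cumulative_0)
  next
    case (Suc j')
    then have "j' < (LEAST j. \<sigma> \<le> cumulative t (Suc j))" by (simp add: prism_index_def)
    then have "\<not> \<sigma> \<le> cumulative t (Suc j')" by (rule not_less_Least)
    then show ?thesis using Suc by simp
  qed
qed

section \<open>Realizing a combinatorial homotopy\<close>

text \<open>\<open>P k j x\<close> is the \<open>j\<close>-th \<open>(k+1)\<close>-simplex of a combinatorial homotopy from the identity
  to \<open>G\<close>; the assumptions are exactly the face relations needed for the pieces of the
  triangulated prisms \<open>[0,1] \<times> \<Delta>\<^sup>k\<close> to glue to a homotopy of the realization.\<close>
locale simplicial_homotopy =
  fixes X :: "nat \<Rightarrow> 'a set" and act :: "nat list \<Rightarrow> 'a \<Rightarrow> 'a"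
    and G :: "nat \<Rightarrow> 'a \<Rightarrow> 'a" and P :: "nat \<Rightarrow> nat \<Rightarrow> 'a \<Rightarrow> 'a"
  assumes G_in: "x \<in> X k \<Longrightarrow> G k x \<in> X k"
    and P_in: "x \<in> X k \<Longrightarrow> j \<le> k \<Longrightarrow> P k j x \<in> X (Suc k)"
    and P_first_face: "x \<in> X k \<Longrightarrow> act (coface_list 0 k) (P k 0 x) = x"
    and P_adjacent_faces: "x \<in> X k \<Longrightarrow> i < k \<Longrightarrow>
      act (coface_list (Suc i) k) (P k i x) = act (coface_list (Suc i) k) (P k (Suc i) x)"
    and P_initial: "x \<in> X k \<Longrightarrow> j \<le> k \<Longrightarrow> act [0..<Suc j] (P k j x) = act [0..<Suc j] (G k x)"
    and P_natural: "\<theta> \<in> mono_list k m \<Longrightarrow> x \<in> X m \<Longrightarrow> j \<le> k \<Longrightarrow>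
      P k j (act \<theta> x) = act (prism_lift \<theta> j k) (P m (\<theta> ! j) x)"
begin

definition prism_homotopy :: "real \<Rightarrow> nat \<times> 'a \<times> (nat \<Rightarrow> real) \<Rightarrow> (nat \<times> 'a \<times> (nat \<Rightarrow> real)) set" where
  "prism_homotopy \<sigma> a = (case a of (k, x, t) \<Rightarrow>
     real_class X act (Suc k, P k (prism_index t \<sigma>) x, prism_coords (prism_index t \<sigma>) t \<sigma>))"

lemmas real_class_act' = real_class_act[where X = X and act = act]

lemma prism_homotopy_simp:
  "prism_homotopy \<sigma> (k, x, t) =
     real_class X act (Suc k, P k (prism_index t \<sigma>) x, prism_coords (prism_index t \<sigma>) t \<sigma>)"
  by (simp add: prism_homotopy_def)

lemma prism_piece_adjacent_eq:
  assumes x: "x \<in> X k" and t: "t \<in> standard_simplex k" and i: "i < k"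
    and \<sigma>: "\<sigma> = cumulative t (Suc i)"
  shows "real_class X act (Suc k, P k i x, prism_coords i t \<sigma>) =
         real_class X act (Suc k, P k (Suc i) x, prism_coords (Suc i) t \<sigma>)"
proof -
  have \<delta>: "coface_list (Suc i) k \<in> mono_list k (Suc k)" using coface_list_in_mono_list i by simp
  \<comment> \<open>on the common wall both pieces are the face \<open>\<delta>\<^sub>i\<^sub>+\<^sub>1\<close>\<close>
  have wall: "simplex_map (coface_list (Suc i) k) t = prism_coords i t \<sigma>"
    "simplex_map (coface_list (Suc i) k) t = prism_coords (Suc i) t \<sigma>"
    using simplex_map_coface_list[of k t "Suc i"] standard_simplexD(3)[OF t] i prism_coords_at_vertex[OF \<sigma>]
    by simp_all
  have "real_class X act (Suc k, P k i x, prism_coords i t \<sigma>) =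
        real_class X act (k, act (coface_list (Suc i) k) (P k i x), t)"
    using real_class_act'[OF \<delta> P_in[OF x] t] wall(1) i by simp
  also have "\<dots> = real_class X act (k, act (coface_list (Suc i) k) (P k (Suc i) x), t)"
    using P_adjacent_faces[OF x i] by simp
  also have "\<dots> = real_class X act (Suc k, P k (Suc i) x, prism_coords (Suc i) t \<sigma>)"
    using real_class_act'[OF \<delta> P_in[OF x] t] wall(2) i by simp
  finally show ?thesis .
qed

lemma prism_piece_eq:
  assumes x: "x \<in> X k" and t: "t \<in> standard_simplex k"
  shows "i \<le> j \<Longrightarrow> j \<le> k \<Longrightarrow> cumulative t i \<le> \<sigma> \<Longrightarrow> \<sigma> \<le> cumulative t (Suc i) \<Longrightarrow>
    cumulative t j \<le> \<sigma> \<Longrightarrow> \<sigma> \<le> cumulative t (Suc j) \<Longrightarrow>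
    real_class X act (Suc k, P k i x, prism_coords i t \<sigma>) =
    real_class X act (Suc k, P k j x, prism_coords j t \<sigma>)"
proof (induction "j - i" arbitrary: i)
  case (Suc d)
  then have ij: "i < j" by simp
  have "cumulative t (Suc i) \<le> cumulative t j" using cumulative_mono[OF t] ij by simp
  then have \<sigma>: "\<sigma> = cumulative t (Suc i)" using Suc.prems by simp
  moreover have "\<sigma> \<le> cumulative t (Suc (Suc i))"
    using \<sigma> cumulative_mono[OF t, of "Suc i" "Suc (Suc i)"] by simp
  ultimately show ?case
    using prism_piece_adjacent_eq[OF x t _ \<sigma>] Suc.hyps(1)[of "Suc i"] Suc.hyps(2) Suc.prems ij by simp
qed simp

lemma prism_homotopy_piece:
  assumes x: "x \<in> X k" and t: "t \<in> standard_simplex k"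
    and \<sigma>: "0 \<le> \<sigma>" "\<sigma> \<le> 1" and j: "j \<le> k" and j_\<sigma>: "cumulative t j \<le> \<sigma>" "\<sigma> \<le> cumulative t (Suc j)"
  shows "prism_homotopy \<sigma> (k, x, t) = real_class X act (Suc k, P k j x, prism_coords j t \<sigma>)"
proof (cases "prism_index t \<sigma> \<le> j")
  case True
  then show ?thesis
    unfolding prism_homotopy_simp by (rule prism_piece_eq[OF x t _ j prism_index_bounds(2,3)[OF t \<sigma>] j_\<sigma>])
next
  case False
  then show ?thesis
    unfolding prism_homotopy_simp
    using prism_piece_eq[OF x t _ prism_index_bounds(1)[OF t \<sigma>] j_\<sigma> prism_index_bounds(2,3)[OF t \<sigma>]] by simp
qed

lemma prism_homotopy_act:
  assumes \<theta>: "\<theta> \<in> mono_list k m" and x: "x \<in> X m" and t: "t \<in> standard_simplex k"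
    and \<sigma>: "0 \<le> \<sigma>" "\<sigma> \<le> 1"
  shows "prism_homotopy \<sigma> (k, act \<theta> x, t) = prism_homotopy \<sigma> (m, x, simplex_map \<theta> t)"
proof -
  define j where "j = prism_index t \<sigma>"
  note J = prism_index_bounds[OF t \<sigma>, folded j_def]
  note lift = prism_lift_bounds[OF \<theta> t J] simplex_map_prism_lift[OF \<theta> J(1)]
  have Jm: "\<theta> ! j \<le> m" using mono_listD(2)[OF \<theta> J(1)] .
  have "prism_homotopy \<sigma> (k, act \<theta> x, t) =
     real_class X act (Suc k, act (prism_lift \<theta> j k) (P m (\<theta> ! j) x), prism_coords j t \<sigma>)"
    by (simp add: prism_homotopy_simp P_natural[OF \<theta> x J(1)] flip: j_def)
  also have "\<dots> = real_class X act (Suc m, P m (\<theta> ! j) x, simplex_map (prism_lift \<theta> j k) (prism_coords j t \<sigma>))"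
    by (rule real_class_act'[OF prism_lift_in_mono_list[OF \<theta> J(1)] P_in[OF x Jm] prism_coords_in_standard_simplex[OF t J]])
  also have "\<dots> = prism_homotopy \<sigma> (m, x, simplex_map \<theta> t)"
    using prism_homotopy_piece[OF x simplex_map_in_standard_simplex[OF \<theta> t] \<sigma> Jm lift(1,2)] lift(3) by simp
  finally show ?thesis .
qed

lemma prism_homotopy_respects:
  assumes "equivclp (real_rel X act) a b" and "0 \<le> \<sigma>" "\<sigma> \<le> 1"
  shows "prism_homotopy \<sigma> a = prism_homotopy \<sigma> b"
  using assms(1)
proof (rule equivclp_respects[rotated])
  fix a b assume "real_rel X act a b"
  then show "prism_homotopy \<sigma> a = prism_homotopy \<sigma> b"
    unfolding real_rel_def using prism_homotopy_act assms(2,3) by auto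
qed

lemma prism_homotopy_0:
  assumes x: "x \<in> X k" and t: "t \<in> standard_simplex k"
  shows "prism_homotopy 0 (k, x, t) = real_class X act (k, x, t)"
proof -
  have \<delta>: "coface_list 0 k \<in> mono_list k (Suc k)" using coface_list_in_mono_list by simp
  have "0 \<le> cumulative t (Suc 0)" using standard_simplexD(1)[OF t] by (simp add: cumulative_Suc cumulative_0)
  then have "prism_homotopy 0 (k, x, t) = real_class X act (Suc k, P k 0 x, prism_coords 0 t 0)"
    using prism_homotopy_piece[OF x t] by (simp add: cumulative_0)
  also have "\<dots> = real_class X act (Suc k, P k 0 x, simplex_map (coface_list 0 k) t)"
    using prism_coords_0 simplex_map_coface_list[of k t 0] standard_simplexD(3)[OF t] by simp
  also have "\<dots> = real_class X act (k, x, t)"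
    using real_class_act'[OF \<delta> P_in[OF x, of 0] t] P_first_face[OF x] by simp
  finally show ?thesis .
qed

lemma prism_homotopy_1:
  assumes x: "x \<in> X k" and t: "t \<in> standard_simplex k"
  shows "prism_homotopy 1 (k, x, t) = real_class X act (k, G k x, t)"
proof -
  define j where "j = prism_index t 1"
  note J = prism_index_bounds[OF t, of 1, folded j_def, simplified]
  note full = prism_coords_full[OF t J(1) J(3)]
  have tj: "t \<in> standard_simplex j" using standard_simplex_truncate[OF t full(1) J(1)] .
  have init: "[0..<Suc j] \<in> mono_list j (Suc k)" "[0..<Suc j] \<in> mono_list j k"
    using upt_in_mono_list J(1) by simp_all
  have t_eq: "simplex_map [0..<Suc j] t = t" using simplex_map_upt[of j t] full(1) by simp
  \<comment> \<open>at height 1 only the face spanned by the support \<open>{0..j}\<close> of \<open>t\<close> is seen\<close>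
  have "prism_homotopy 1 (k, x, t) = real_class X act (Suc k, P k j x, t)"
    using full(2) by (simp add: prism_homotopy_simp j_def)
  also have "\<dots> = real_class X act (j, act [0..<Suc j] (P k j x), t)"
    using real_class_act'[OF init(1) P_in[OF x J(1)] tj] t_eq by simp
  also have "\<dots> = real_class X act (j, act [0..<Suc j] (G k x), t)"
    using P_initial[OF x J(1)] by simp
  also have "\<dots> = real_class X act (k, G k x, t)"
    using real_class_act'[OF init(2) G_in[OF x] tj] t_eq by simp
  finally show ?thesis .
qed

lemma prism_homotopy_stationary:
  assumes x: "x \<in> X k" and t: "t \<in> standard_simplex k" and \<sigma>: "0 \<le> \<sigma>" "\<sigma> \<le> 1"
    and degenerate: "\<And>j. j \<le> k \<Longrightarrow> P k j x = act (codegeneracy_list j k) x"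
  shows "prism_homotopy \<sigma> (k, x, t) = real_class X act (k, x, t)"
proof -
  define j where "j = prism_index t \<sigma>"
  note J = prism_index_bounds[OF t \<sigma>, folded j_def]
  have "prism_homotopy \<sigma> (k, x, t) =
      real_class X act (Suc k, act (codegeneracy_list j k) x, prism_coords j t \<sigma>)"
    using degenerate[OF J(1)] by (simp add: prism_homotopy_simp j_def)
  also have "\<dots> = real_class X act (k, x, simplex_map (codegeneracy_list j k) (prism_coords j t \<sigma>))"
    by (rule real_class_act'[OF codegeneracy_list_in_mono_list[OF J(1)] x prism_coords_in_standard_simplex[OF t J]])
  also have "\<dots> = real_class X act (k, x, t)" using simplex_map_codegeneracy_list[OF t J(1)] by simp
  finally show ?thesis .
qed

end

lemma closedin_continuous_map_le:
  assumes "continuous_map X euclideanreal f" "continuous_map X euclideanreal g"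
  shows "closedin X {x \<in> topspace X. f x \<le> g x}"
proof -
  have "closedin X {x \<in> topspace X. f x - g x \<in> {..0}}"
    using assms by (intro closedin_continuous_map_preimage[where Y = euclideanreal] continuous_map_diff) auto
  then show ?thesis by simp
qed

lemma
  fixes S :: "(nat \<Rightarrow> real) set"
  defines "Z \<equiv> prod_topology (top_of_set {0..1::real}) (subtopology (powertop_real UNIV) S)"
  shows continuous_map_prism_param: "continuous_map Z euclideanreal fst"
    and continuous_map_prism_cumulative: "continuous_map Z euclideanreal (\<lambda>z. cumulative (snd z) j)"
    and continuous_map_prism_coords: "continuous_map Z (powertop_real UNIV) (\<lambda>z. prism_coords j (snd z) (fst z))"
proof -
  show fst: "continuous_map Z euclideanreal fst"
    using continuous_map_compose[OF continuous_map_fst continuous_map_from_subtopology[OF continuous_map_id]]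
    by (simp add: Z_def o_def)
  have "continuous_map (subtopology (powertop_real UNIV) S) euclideanreal (\<lambda>t. t i)" for i
    by (rule continuous_map_from_subtopology[OF continuous_map_product_projection]) simp
  from continuous_map_compose[OF continuous_map_snd this]
  have coord: "continuous_map Z euclideanreal (\<lambda>z. snd z i)" for i
    by (simp add: Z_def o_def)
  show cum: "continuous_map Z euclideanreal (\<lambda>z. cumulative (snd z) i)" for i
    unfolding cumulative_def by (intro continuous_map_sum coord) auto
  show "continuous_map Z (powertop_real UNIV) (\<lambda>z. prism_coords j (snd z) (fst z))"
    unfolding continuous_map_componentwise_UNIV prism_coords_def
  proof
    fix l
    show "continuous_map Z euclideanreal (\<lambda>z. if l < j then snd z l else if l = j then fst z - cumulative (snd z) j
      else if l = Suc j then cumulative (snd z) (Suc j) - fst z else snd z (l - 1))"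
      by (cases "l < j"; cases "l = j"; cases "l = Suc j") (simp_all add: continuous_map_diff coord cum fst)
  qed
qed

context simplicial_homotopy
begin

lemma continuous_map_prism_homotopy_slice:
  assumes x: "x \<in> X k"
  shows "continuous_map (prod_topology (top_of_set {0..1::real}) (subtopology (powertop_real UNIV) (standard_simplex k)))
     (realization X act) (\<lambda>z. prism_homotopy (fst z) (k, x, snd z))"
proof -
  let ?Z = "prod_topology (top_of_set {0..1::real}) (subtopology (powertop_real UNIV) (standard_simplex k))"
  define slab where
    "slab j = {z \<in> topspace ?Z. cumulative (snd z) j \<le> fst z \<and> fst z \<le> cumulative (snd z) (Suc j)}" for j
  define piece where "piece j z = real_class X act (Suc k, P k j x, prism_coords j (snd z) (fst z))" for j z
  show ?thesis
  proof (rule pasting_lemma_closed[where I = "{..k}" and T = slab and f = piece])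
    fix j
    have "slab j = {z \<in> topspace ?Z. cumulative (snd z) j \<le> fst z} \<inter>
        {z \<in> topspace ?Z. fst z \<le> cumulative (snd z) (Suc j)}"
      by (auto simp: slab_def)
    then show "closedin ?Z (slab j)"
      by (simp only:) (intro closedin_Int closedin_continuous_map_le
          continuous_map_prism_param continuous_map_prism_cumulative)
  next
    fix j assume "j \<in> {..k}"
    then have j: "j \<le> k" by simp
    have "continuous_map (subtopology ?Z (slab j)) (subtopology (powertop_real UNIV) (standard_simplex (Suc k)))
        (\<lambda>z. prism_coords j (snd z) (fst z))"
    proof (rule continuous_map_into_subtopology)
      show "continuous_map (subtopology ?Z (slab j)) (powertop_real UNIV) (\<lambda>z. prism_coords j (snd z) (fst z))"
        by (intro continuous_map_from_subtopology continuous_map_prism_coords)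
      show "(\<lambda>z. prism_coords j (snd z) (fst z)) \<in> topspace (subtopology ?Z (slab j)) \<rightarrow> standard_simplex (Suc k)"
        using j prism_coords_in_standard_simplex by (auto simp: slab_def)
    qed
    from continuous_map_compose[OF this continuous_map_real_class[where Y = X and act = act, OF P_in[OF x j]]]
    show "continuous_map (subtopology ?Z (slab j)) (realization X act) (piece j)"
      by (simp add: piece_def[abs_def] o_def)
  next
    fix i j z assume ij: "i \<in> {..k}" "j \<in> {..k}" "z \<in> topspace ?Z \<inter> slab i \<inter> slab j"
    then have z: "snd z \<in> standard_simplex k" "cumulative (snd z) i \<le> fst z" "fst z \<le> cumulative (snd z) (Suc i)"
       "cumulative (snd z) j \<le> fst z" "fst z \<le> cumulative (snd z) (Suc j)"
      by (auto simp: slab_def)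
    show "piece i z = piece j z"
    proof (cases "i \<le> j")
      case True
      then show ?thesis unfolding piece_def using prism_piece_eq[OF x z(1) True _ z(2-5)] ij by simp
    next
      case False
      then show ?thesis unfolding piece_def using prism_piece_eq[OF x z(1) _ _ z(4,5,2,3)] ij by simp
    qed
  next
    fix z assume z: "z \<in> topspace ?Z"
    then have "snd z \<in> standard_simplex k" "0 \<le> fst z" "fst z \<le> 1" by auto
    from prism_index_bounds[OF this]
    show "\<exists>j. j \<in> {..k} \<and> z \<in> slab j \<and> prism_homotopy (fst z) (k, x, snd z) = piece j z"
      using z by (intro exI[of _ "prism_index (snd z) (fst z)"]) (simp add: slab_def piece_def prism_homotopy_simp)
  qed simp
qed

definition realized_homotopy :: "real \<times> (nat \<times> 'a \<times> (nat \<Rightarrow> real)) set \<Rightarrow> (nat \<times> 'a \<times> (nat \<Rightarrow> real)) set" where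
  "realized_homotopy z = prism_homotopy (fst z) (SOME a. a \<in> snd z)"

lemma realized_homotopy_class:
  assumes a: "a \<in> real_carrier X" and s: "s \<in> {0..1}"
  shows "realized_homotopy (s, real_class X act a) = prism_homotopy s a"
proof -
  let ?c = "real_class X act a"
  have "(SOME b. b \<in> ?c) \<in> ?c" using real_class_self[OF a] by (rule someI)
  then have "equivclp (real_rel X act) a (SOME b. b \<in> ?c)"
    unfolding real_class_def by blast
  then have "prism_homotopy s a = prism_homotopy s (SOME b. b \<in> ?c)"
    by (rule prism_homotopy_respects) (use s in auto)
  then show ?thesis by (simp add: realized_homotopy_def)
qed

lemma continuous_map_realized_homotopy:
  "continuous_map (prod_topology (top_of_set {0..1::real}) (realization X act)) (realization X act)
     realized_homotopy"
proof -
  have quotient: "quotient_map (prod_topology (top_of_set {0..1::real}) (real_pre X))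
      (prod_topology (top_of_set {0..1::real}) (realization X act)) (\<lambda>(s, a). (s, real_class X act a))"
    by (rule quotient_map_prod_right[OF _ _ quotient_map_real_class])
      (simp_all add: compact_imp_locally_compact_space compact_space_subtopology Hausdorff_space_subtopology)
  have "continuous_map (prod_topology (top_of_set {0..1::real}) (real_pre X))
      (realization X act) (\<lambda>z. prism_homotopy (fst z) (snd z))"
    unfolding real_pre_eq_sum_topology
  proof (intro continuous_map_prod_sum_topology)
    fix k x assume "x \<in> X k"
    then show "continuous_map (prod_topology (top_of_set {0..1::real}) (subtopology (powertop_real UNIV) (standard_simplex k)))
        (realization X act) (\<lambda>(z, t). (\<lambda>(z, x). prism_homotopy (fst (z, k, x)) (snd (z, k, x))) (z, x, t))"
      using continuous_map_prism_homotopy_slice by (simp add: case_prod_beta')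
  qed
  then show ?thesis
  proof (rule continuous_compose_quotient_map[OF quotient, OF continuous_map_eq])
    fix z assume "z \<in> topspace (prod_topology (top_of_set {0..1::real}) (real_pre X))"
    then show "prism_homotopy (fst z) (snd z) = (realized_homotopy \<circ> (\<lambda>(s, a). (s, real_class X act a))) z"
      using realized_homotopy_class by (cases z) (simp add: topspace_real_pre)
  qed
qed

lemma realized_homotopy_0:
  "c \<in> topspace (realization X act) \<Longrightarrow> realized_homotopy (0, c) = c"
  by (auto simp: topspace_realization real_carrier_def realized_homotopy_class prism_homotopy_0)

lemma realized_homotopy_1:
  assumes "x \<in> X k" "t \<in> standard_simplex k"
  shows "realized_homotopy (1, real_class X act (k, x, t)) = real_class X act (k, G k x, t)"
  using assms by (simp add: real_carrier_def realized_homotopy_class prism_homotopy_1)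

lemma realized_homotopy_stationary:
  assumes "x \<in> X k" "t \<in> standard_simplex k" "s \<in> {0..1}"
    and "\<And>j. j \<le> k \<Longrightarrow> P k j x = act (codegeneracy_list j k) x"
  shows "realized_homotopy (s, real_class X act (k, x, t)) = real_class X act (k, x, t)"
  using assms by (simp add: real_carrier_def realized_homotopy_class prism_homotopy_stationary)

theorem sset_weq_if_deformation_retract:
  assumes F: "simplicial_map A actA X act F" and R: "simplicial_map X act A actA R"
    and RF: "\<And>k a. a \<in> A k \<Longrightarrow> R k (F k a) = a"
    and FR: "\<And>k x. x \<in> X k \<Longrightarrow> F k (R k x) = G k x"
    and stationary: "\<And>k a j. a \<in> A k \<Longrightarrow> j \<le> k \<Longrightarrow> P k j (F k a) = act (codegeneracy_list j k) (F k a)"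
  shows "sset_weq A actA X act F"
  unfolding sset_weq_def
proof (rule weak_homotopy_equivalence_if_deformation_retract[OF continuous_map_realize_map[OF F]
      continuous_map_realize_map[OF R] _ continuous_map_realized_homotopy realized_homotopy_0])
  have F_in: "F k a \<in> X k" if "a \<in> A k" for k a
    using F that by (simp add: simplicial_map_def)
  have R_in: "R k x \<in> A k" if "x \<in> X k" for k x
    using R that by (simp add: simplicial_map_def)
  note F_class = realize_map_class[OF F, unfolded real_carrier_def, simplified]
  note R_class = realize_map_class[OF R, unfolded real_carrier_def, simplified]
  show "realize_map A actA R (realize_map X act F c) = c" if "c \<in> topspace (realization A actA)" for c
    using that by (auto simp: topspace_realization real_carrier_def F_class R_class F_in RF)
  show "realized_homotopy (1, y) = realize_map X act F (realize_map A actA R y)"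
    if "y \<in> topspace (realization X act)" for y
    using that by (auto simp: topspace_realization real_carrier_def F_class R_class R_in FR realized_homotopy_1)
  show "realized_homotopy (s, realize_map X act F c) = realize_map X act F c"
    if c_in: "c \<in> topspace (realization A actA)" and s: "s \<in> {0..1}" for c s
  proof -
    obtain k a t where c: "c = real_class A actA (k, a, t)" "a \<in> A k" "t \<in> standard_simplex k"
      using c_in by (auto simp: topspace_realization real_carrier_def)
    have "realized_homotopy (s, real_class X act (k, F k a, t)) = real_class X act (k, F k a, t)"
      by (rule realized_homotopy_stationary[OF F_in[OF c(2)] c(3) s stationary[OF c(2)]])
    then show ?thesis using c by (simp add: F_class)
  qed
qed

end

section \<open>The unit of \<open>K \<stileturn> N\<close> on a standard multisimplex\<close>

lemma leq_iff: "leq (xs, y) (xs', y') \<longleftrightarrow> length xs = length xs' \<and> (\<forall>i<length xs. xs ! i \<le> xs' ! i) \<and> y \<le> y'"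
  by (simp add: leq_def list_all2_conv_all_nth)

lemma Obj_iff: "(xs, y) \<in> Obj pp k \<longleftrightarrow> length xs = length pp \<and> (\<forall>i<length pp. xs ! i \<le> pp ! i) \<and> y \<le> k"
  by (simp add: Obj_def)

lemma NK_simpD:
  assumes "f \<in> NK_simp ps q pp k"
  shows "f \<in> extensional (Obj pp k)"
    "\<And>a. a \<in> Obj pp k \<Longrightarrow> f a \<in> Obj ps q"
    "\<And>a b. a \<in> Obj pp k \<Longrightarrow> b \<in> Obj pp k \<Longrightarrow> leq a b \<Longrightarrow> leq (f a) (f b)"
    "\<And>a b. a \<in> Obj pp k \<Longrightarrow> b \<in> Obj pp k \<Longrightarrow> in_w a b \<Longrightarrow> in_w (f a) (f b)"
    "\<And>i a b. i < length ps \<Longrightarrow> a \<in> Obj pp k \<Longrightarrow> b \<in> Obj pp k \<Longrightarrow> in_v i a b \<Longrightarrow> in_v i (f a) (f b)"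
  using assms unfolding NK_simp_def by blast+

lemma NK_simpI:
  assumes "f \<in> extensional (Obj pp k)"
    "\<And>a. a \<in> Obj pp k \<Longrightarrow> f a \<in> Obj ps q"
    "\<And>a b. a \<in> Obj pp k \<Longrightarrow> b \<in> Obj pp k \<Longrightarrow> leq a b \<Longrightarrow> leq (f a) (f b)"
    "\<And>a b. a \<in> Obj pp k \<Longrightarrow> b \<in> Obj pp k \<Longrightarrow> in_w a b \<Longrightarrow> in_w (f a) (f b)"
    "\<And>i a b. i < length ps \<Longrightarrow> a \<in> Obj pp k \<Longrightarrow> b \<in> Obj pp k \<Longrightarrow> in_v i a b \<Longrightarrow> in_v i (f a) (f b)"
  shows "f \<in> NK_simp ps q pp k"
  using assms unfolding NK_simp_def by blast

lemma unit_Delta_apply: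
  "(xs, y) \<in> Obj pp k \<Longrightarrow> unit_Delta ps q pp k (\<alpha>s, \<beta>) (xs, y) =
     (map (\<lambda>i. \<alpha>s ! i ! (xs ! i)) [0..<length pp], \<beta> ! y)"
  by (simp add: unit_Delta_def Obj_iff)

lemma Delta_simpD:
  assumes "(\<alpha>s, \<beta>) \<in> Delta_simp ps q pp k"
  shows "length \<alpha>s = length ps" "\<And>i. i < length ps \<Longrightarrow> \<alpha>s ! i \<in> mono_list (pp ! i) (ps ! i)"
    "\<beta> \<in> mono_list k q"
  using assms by (auto simp: Delta_simp_def)

lemma unit_Delta_in_NK_simp:
  assumes len: "length pp = length ps" and x: "x \<in> Delta_simp ps q pp k"
  shows "unit_Delta ps q pp k x \<in> NK_simp ps q pp k"
proof -
  obtain \<alpha>s \<beta> where xe: "x = (\<alpha>s, \<beta>)" by (cases x)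
  note D = Delta_simpD[OF x[unfolded xe]]
  have v: "unit_Delta ps q pp k x (xs, y) = (map (\<lambda>i. \<alpha>s ! i ! (xs ! i)) [0..<length pp], \<beta> ! y)"
    if "(xs, y) \<in> Obj pp k" for xs y
    using unit_Delta_apply[OF that] xe by simp
  have \<alpha>_mono: "\<alpha>s ! i ! a \<le> \<alpha>s ! i ! b" if "i < length pp" "a \<le> b" "b \<le> pp ! i" for i a b
    using mono_listD(3)[OF D(2)] that len by simp
  have \<alpha>_le: "\<alpha>s ! i ! a \<le> ps ! i" if "i < length pp" "a \<le> pp ! i" for i a
    using mono_listD(2)[OF D(2)] that len by simp
  note \<beta> = mono_listD(2,3)[OF D(3)]
  show ?thesis
  proof (rule NK_simpI)
    show "unit_Delta ps q pp k x \<in> extensional (Obj pp k)" by (simp add: unit_Delta_def)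
  next
    fix a assume "a \<in> Obj pp k"
    then show "unit_Delta ps q pp k x a \<in> Obj ps q"
      using len \<alpha>_le \<beta> by (cases a) (auto simp: v Obj_iff)
  next
    fix a b assume "a \<in> Obj pp k" "b \<in> Obj pp k" "leq a b"
    then show "leq (unit_Delta ps q pp k x a) (unit_Delta ps q pp k x b)"
      using \<alpha>_mono \<beta> by (cases a; cases b) (auto simp: v Obj_iff leq_iff)
  next
    fix a b assume "a \<in> Obj pp k" "b \<in> Obj pp k" "in_w a b"
    then show "in_w (unit_Delta ps q pp k x a) (unit_Delta ps q pp k x b)"
      using \<beta> by (cases a; cases b) (auto simp: v Obj_iff leq_iff in_w_def)
  next
    fix i a b assume "i < length ps" "a \<in> Obj pp k" "b \<in> Obj pp k" "in_v i a b"
    then show "in_v i (unit_Delta ps q pp k x a) (unit_Delta ps q pp k x b)"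
      using \<alpha>_mono \<beta> by (cases a; cases b) (auto simp: v Obj_iff leq_iff in_v_def)
  qed
qed

lemma NK_act_apply:
  assumes "\<theta> \<in> mono_list k m" "(xs, y) \<in> Obj pp k"
  shows "NK_act pp \<theta> f (xs, y) = f (xs, \<theta> ! y)"
  using assms mono_listD(1)[OF assms(1)] by (simp add: NK_act_def)

lemma NK_act_extensional: "\<theta> \<in> mono_list k m \<Longrightarrow> NK_act pp \<theta> f \<in> extensional (Obj pp k)"
  using mono_listD(1) by (simp add: NK_act_def)

lemma unit_Delta_natural:
  assumes th: "\<theta> \<in> mono_list k m" and x: "x \<in> Delta_simp ps q pp m"
  shows "unit_Delta ps q pp k (Delta_act pp \<theta> x) = NK_act pp \<theta> (unit_Delta ps q pp m x)"
proof (rule extensionalityI[OF _ NK_act_extensional[OF th]])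
  show "unit_Delta ps q pp k (Delta_act pp \<theta> x) \<in> extensional (Obj pp k)" by (simp add: unit_Delta_def)
next
  fix a assume a: "a \<in> Obj pp k"
  obtain xs y where ae: "a = (xs, y)" by (cases a)
  obtain \<alpha>s \<beta> where xe: "x = (\<alpha>s, \<beta>)" by (cases x)
  have y: "y \<le> k" using a ae by (simp add: Obj_iff)
  have "(xs, \<theta> ! y) \<in> Obj pp m" using a ae mono_listD(2)[OF th y] by (simp add: Obj_iff)
  then show "unit_Delta ps q pp k (Delta_act pp \<theta> x) a = NK_act pp \<theta> (unit_Delta ps q pp m x) a"
    unfolding ae NK_act_apply[OF th a[unfolded ae]] xe Delta_act_def
    using unit_Delta_apply[OF a[unfolded ae]] unit_Delta_apply mono_listD(1)[OF th] y by simp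
qed

text \<open>The \<open>n\<close> monotone maps are read off the coordinate axes at level \<open>0\<close>, and the monotone
  map of the \<open>q\<close>-direction off the column over the origin.\<close>
definition NK_retraction :: "nat list \<Rightarrow> nat \<Rightarrow> (nat list \<times> nat \<Rightarrow> nat list \<times> nat) \<Rightarrow> nat list list \<times> nat list" where
  "NK_retraction pp k f = (map (\<lambda>i. map (\<lambda>j. fst (f ((replicate (length pp) 0)[i := j], 0)) ! i) [0..<Suc (pp ! i)])
       [0..<length pp], map (\<lambda>y. snd (f (replicate (length pp) 0, y))) [0..<Suc k])"

lemma axis_in_Obj: "i < length pp \<Longrightarrow> j \<le> pp ! i \<Longrightarrow> y \<le> k \<Longrightarrow> ((replicate (length pp) 0)[i := j], y) \<in> Obj pp k"
  by (auto simp: Obj_iff nth_list_update)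

lemma base_in_Obj: "y \<le> k \<Longrightarrow> (replicate (length pp) 0, y) \<in> Obj pp k"
  by (auto simp: Obj_iff)

lemma NK_retraction_in_Delta_simp:
  assumes len: "length pp = length ps" and f: "f \<in> NK_simp ps q pp k"
  shows "NK_retraction pp k f \<in> Delta_simp ps q pp k"
proof -
  note F = NK_simpD[OF f]
  have A: "map (\<lambda>j. fst (f ((replicate (length pp) 0)[i := j], 0)) ! i) [0..<Suc (pp ! i)] \<in> mono_list (pp ! i) (ps ! i)"
    if i: "i < length ps" for i
  proof (rule map_upt_in_mono_list)
    have ip: "i < length pp" using i len by simp
    fix j assume j: "j \<le> pp ! i"
    have "f ((replicate (length pp) 0)[i := j], 0) \<in> Obj ps q" using F(2)[OF axis_in_Obj[OF ip j, of 0 k]] by simp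
    then show "fst (f ((replicate (length pp) 0)[i := j], 0)) ! i \<le> ps ! i"
      using i by (cases "f ((replicate (length pp) 0)[i := j], 0)") (simp add: Obj_iff)
  next
    fix j j' assume jj: "j \<le> j'" "j' \<le> pp ! i"
    have ip: "i < length pp" using i len by simp
    have o1: "((replicate (length pp) 0)[i := j], 0) \<in> Obj pp k" using axis_in_Obj[OF ip] jj by simp
    have o2: "((replicate (length pp) 0)[i := j'], 0) \<in> Obj pp k" using axis_in_Obj[OF ip] jj by simp
    have "leq (f ((replicate (length pp) 0)[i := j], 0)) (f ((replicate (length pp) 0)[i := j'], 0))"
      using F(3)[OF o1 o2] ip jj by (simp add: leq_iff nth_list_update)
    moreover have "f ((replicate (length pp) 0)[i := j], 0) \<in> Obj ps q" using F(2)[OF o1] .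
    ultimately show "fst (f ((replicate (length pp) 0)[i := j], 0)) ! i \<le> fst (f ((replicate (length pp) 0)[i := j'], 0)) ! i"
      using i by (auto simp: leq_def list_all2_conv_all_nth Obj_def)
  qed
  have B: "map (\<lambda>y. snd (f (replicate (length pp) 0, y))) [0..<Suc k] \<in> mono_list k q"
  proof (rule map_upt_in_mono_list)
    fix y assume y: "y \<le> k"
    have "f (replicate (length pp) 0, y) \<in> Obj ps q" using F(2) base_in_Obj y by simp
    then show "snd (f (replicate (length pp) 0, y)) \<le> q" by (auto simp: Obj_def)
  next
    fix y y' assume yy: "y \<le> y'" "y' \<le> k"
    have "leq (f (replicate (length pp) 0, y)) (f (replicate (length pp) 0, y'))"
      using F(3) base_in_Obj yy by (simp add: leq_iff)
    then show "snd (f (replicate (length pp) 0, y)) \<le> snd (f (replicate (length pp) 0, y'))"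
      by (simp add: leq_def)
  qed
  show ?thesis unfolding NK_retraction_def Delta_simp_def using A B len by simp
qed

lemma NK_retraction_natural:
  assumes th: "\<theta> \<in> mono_list k m" and f: "f \<in> NK_simp ps q pp m"
  shows "NK_retraction pp k (NK_act pp \<theta> f) = Delta_act pp \<theta> (NK_retraction pp m f)"
proof -
  note F = NK_simpD[OF f]
  have A: "fst (NK_act pp \<theta> f ((replicate (length pp) 0)[i := j], 0)) ! i
         = fst (f ((replicate (length pp) 0)[i := j], 0)) ! i" if i: "i < length pp" and j: "j \<le> pp ! i" for i j
  proof -
    have o0: "((replicate (length pp) 0)[i := j], 0) \<in> Obj pp k" using axis_in_Obj[OF i j] by simp
    have o1: "((replicate (length pp) 0)[i := j], 0) \<in> Obj pp m" using axis_in_Obj[OF i j] by simp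
    have t0: "\<theta> ! 0 \<le> m" using mono_listD(2)[OF th] by simp
    have o2: "((replicate (length pp) 0)[i := j], \<theta> ! 0) \<in> Obj pp m" using axis_in_Obj[OF i j t0] .
    have "in_w (f ((replicate (length pp) 0)[i := j], 0)) (f ((replicate (length pp) 0)[i := j], \<theta> ! 0))"
      using F(4)[OF o1 o2] by (simp add: in_w_def leq_iff)
    then show ?thesis using NK_act_apply[OF th o0] by (simp add: in_w_def)
  qed
  have B: "snd (NK_act pp \<theta> f (replicate (length pp) 0, y)) = snd (f (replicate (length pp) 0, \<theta> ! y))"
    if "y \<le> k" for y
    using NK_act_apply[OF th base_in_Obj[OF that]] by simp
  have C: "map (\<lambda>y. snd (NK_act pp \<theta> f (replicate (length pp) 0, y))) [0..<Suc k]
     = map ((!) (map (\<lambda>y. snd (f (replicate (length pp) 0, y))) [0..<Suc m])) \<theta>"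
    using mono_listD(1,2)[OF th] B by (intro nth_equalityI) (auto simp del: upt_Suc simp: less_Suc_eq_le)
  show ?thesis
    unfolding NK_retraction_def Delta_act_def using A C by (simp del: upt_Suc)
qed

lemma NK_retraction_unit_Delta:
  assumes len: "length pp = length ps" and x: "x \<in> Delta_simp ps q pp k"
  shows "NK_retraction pp k (unit_Delta ps q pp k x) = x"
proof -
  obtain \<alpha>s \<beta> where xe: "x = (\<alpha>s, \<beta>)" by (cases x)
  note D = Delta_simpD[OF x[unfolded xe]]
  have \<alpha>s: "fst (unit_Delta ps q pp k x ((replicate (length pp) 0)[i := j], 0)) ! i = \<alpha>s ! i ! j"
    if "i < length pp" "j \<le> pp ! i" for i j
    using unit_Delta_apply[OF axis_in_Obj[OF that, of 0 k]] xe that by (simp add: nth_list_update)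
  have \<beta>: "snd (unit_Delta ps q pp k x (replicate (length pp) 0, y)) = \<beta> ! y" if "y \<le> k" for y
    using unit_Delta_apply[OF base_in_Obj[OF that]] xe by simp
  have lengths: "length \<alpha>s = length pp" "\<And>i. i < length pp \<Longrightarrow> length (\<alpha>s ! i) = Suc (pp ! i)"
    "length \<beta> = Suc k"
    using D len mono_listD(1) by auto
  have "map (\<lambda>i. map (\<lambda>j. fst (unit_Delta ps q pp k x ((replicate (length pp) 0)[i := j], 0)) ! i)
      [0..<Suc (pp ! i)]) [0..<length pp] = \<alpha>s"
    by (rule nth_equalityI) (auto simp del: upt_Suc simp: lengths \<alpha>s intro!: nth_equalityI)
  moreover have "map (\<lambda>y. snd (unit_Delta ps q pp k x (replicate (length pp) 0, y))) [0..<Suc k] = \<beta>"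
    by (rule nth_equalityI) (auto simp del: upt_Suc simp: lengths \<beta>)
  ultimately show ?thesis unfolding NK_retraction_def xe by simp
qed

lemma NK_simp_fst_nth_in_v:
  assumes len: "length pp = length ps" and f: "f \<in> NK_simp ps q pp k"
    and a: "a \<in> Obj pp k" and b: "b \<in> Obj pp k" and ab: "in_v d a b"
    and d: "d < length pp" and i: "i < length pp" "i \<noteq> d"
  shows "fst (f a) ! i = fst (f b) ! i"
proof -
  have "in_v d (f a) (f b)" using NK_simpD(5)[OF f _ a b ab] d len by simp
  moreover have "length (fst (f a)) = length ps"
    using NK_simpD(2)[OF f a] by (cases "f a") (simp add: Obj_iff)
  ultimately show ?thesis using i len by (simp add: in_v_def)
qed

text \<open>The \<open>i\<close>-th coordinate of \<open>f (xs, y)\<close> only depends on \<open>xs ! i\<close>: the other coordinates of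
  \<open>xs\<close> are switched on one at a time by \<open>v\<close>-maps, and \<open>y\<close> is reached by a \<open>w\<close>-map.\<close>
lemma NK_simp_coordinate:
  assumes len: "length pp = length ps" and f: "f \<in> NK_simp ps q pp k"
    and a: "(xs, y) \<in> Obj pp k" and i: "i < length pp"
  shows "fst (f (xs, y)) ! i = fst (f ((replicate (length pp) 0)[i := xs ! i], 0)) ! i"
proof -
  have xs: "length xs = length pp" "\<And>l. l < length pp \<Longrightarrow> xs ! l \<le> pp ! l"
    using a by (auto simp: Obj_iff)
  define u where "u d = map (\<lambda>l. if l < d \<or> l = i then xs ! l else 0) [0..<length pp]" for d
  have u_Obj: "(u d, 0) \<in> Obj pp k" for d
    using xs by (auto simp: u_def Obj_iff)
  have step: "fst (f (u (Suc d), 0)) ! i = fst (f (u d, 0)) ! i" for d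
  proof (cases "d < length pp \<and> d \<noteq> i")
    case True
    then have "in_v d (u d, 0) (u (Suc d), 0)"
      by (auto simp: in_v_def leq_iff u_def less_Suc_eq)
    then show ?thesis
      using NK_simp_fst_nth_in_v[OF len f u_Obj u_Obj _ _ i] True by simp
  next
    case False
    then have "u (Suc d) = u d" by (auto simp: u_def less_Suc_eq)
    then show ?thesis by simp
  qed
  have "fst (f (u d, 0)) ! i = fst (f (u 0, 0)) ! i" for d
    by (induction d) (simp_all add: step)
  moreover have "u 0 = (replicate (length pp) 0)[i := xs ! i]" "u (length pp) = xs"
    by (auto simp: u_def xs(1) intro!: nth_equalityI simp: nth_list_update)
  moreover have "in_w (f (xs, 0)) (f (xs, y))"
    using a by (intro NK_simpD(4)[OF f _ a]) (simp_all add: in_w_def leq_iff Obj_iff)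
  ultimately show ?thesis by (metis in_w_def)
qed

definition NK_project :: "nat list \<Rightarrow> nat \<Rightarrow> (nat list \<times> nat \<Rightarrow> nat list \<times> nat) \<Rightarrow> (nat list \<times> nat \<Rightarrow> nat list \<times> nat)" where
  "NK_project pp k f = restrict (\<lambda>(xs, y). (fst (f (xs, y)), snd (f (replicate (length pp) 0, y)))) (Obj pp k)"

lemma unit_Delta_NK_retraction:
  assumes len: "length pp = length ps" and f: "f \<in> NK_simp ps q pp k"
  shows "unit_Delta ps q pp k (NK_retraction pp k f) = NK_project pp k f"
proof (rule extensionalityI)
  show "unit_Delta ps q pp k (NK_retraction pp k f) \<in> extensional (Obj pp k)" by (simp add: unit_Delta_def)
  show "NK_project pp k f \<in> extensional (Obj pp k)" by (simp add: NK_project_def)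
next
  fix a assume a: "a \<in> Obj pp k"
  obtain xs y where ae: "a = (xs, y)" by (cases a)
  have xs: "length xs = length pp" "\<And>l. l < length pp \<Longrightarrow> xs ! l \<le> pp ! l" "y \<le> k"
    using a ae by (auto simp: Obj_iff)
  have fl: "length (fst (f (xs, y))) = length pp"
    using NK_simpD(2)[OF f a] ae len by (cases "f (xs, y)") (simp add: Obj_iff)
  have L: "map (\<lambda>i. fst (NK_retraction pp k f) ! i ! (xs ! i)) [0..<length pp] = fst (f (xs, y))"
  proof (rule nth_equalityI)
    fix i assume "i < length (map (\<lambda>i. fst (NK_retraction pp k f) ! i ! (xs ! i)) [0..<length pp])"
    then have i: "i < length pp" by simp
    have "xs ! i < Suc (pp ! i)" using xs(2)[OF i] by simp
    then show "map (\<lambda>i. fst (NK_retraction pp k f) ! i ! (xs ! i)) [0..<length pp] ! i = fst (f (xs, y)) ! i"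
      using NK_simp_coordinate[OF len f a[unfolded ae] i] i by (simp del: upt_Suc add: NK_retraction_def)
  qed (simp add: fl)
  have R: "snd (NK_retraction pp k f) ! y = snd (f (replicate (length pp) 0, y))"
    using xs(3) by (simp del: upt_Suc add: NK_retraction_def nth_append)
  show "unit_Delta ps q pp k (NK_retraction pp k f) a = NK_project pp k f a"
    using unit_Delta_apply[OF a[unfolded ae], where \<alpha>s="fst (NK_retraction pp k f)" and \<beta>="snd (NK_retraction pp k f)"] L R a ae
    by (simp add: NK_project_def)
qed

text \<open>The second coordinate of \<open>f\<close> grows along the \<open>w\<close>-map from the origin, so
  \<open>NK_project pp k f \<le> f\<close> is a natural transformation in the \<open>q\<close>-direction; \<open>NK_prism pp k j f\<close>
  is the \<open>j\<close>-th simplex of the induced prism, equal to \<open>NK_project pp k f\<close> up to level \<open>j\<close>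
  and to \<open>f\<close> from there on.\<close>
definition NK_prism :: "nat list \<Rightarrow> nat \<Rightarrow> nat \<Rightarrow> (nat list \<times> nat \<Rightarrow> nat list \<times> nat) \<Rightarrow> (nat list \<times> nat \<Rightarrow> nat list \<times> nat)" where
  "NK_prism pp k j f = restrict (\<lambda>(xs, l). (fst (f (xs, if l \<le> j then l else l - 1)),
      if l \<le> j then snd (f (replicate (length pp) 0, l)) else snd (f (xs, l - 1)))) (Obj pp (Suc k))"

lemma NK_prism_apply: "(xs, l) \<in> Obj pp (Suc k) \<Longrightarrow> NK_prism pp k j f (xs, l) = (fst (f (xs, if l \<le> j then l else l - 1)),
      if l \<le> j then snd (f (replicate (length pp) 0, l)) else snd (f (xs, l - 1)))"
  by (simp add: NK_prism_def)

lemma NK_prism_in_NK_simp: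
  assumes f: "f \<in> NK_simp ps q pp k" and j: "j \<le> k"
  shows "NK_prism pp k j f \<in> NK_simp ps q pp (Suc k)"
proof -
  note F = NK_simpD[OF f]
  define \<psi> :: "nat list \<times> nat \<Rightarrow> nat list \<times> nat"
    where "\<psi> = (\<lambda>(xs, l). (xs, if l \<le> j then l else l - 1))"
  define \<phi> :: "nat list \<times> nat \<Rightarrow> nat list \<times> nat"
    where "\<phi> = (\<lambda>(xs, l). if l \<le> j then (replicate (length pp) 0, l) else (xs, l - 1))"
  have val: "NK_prism pp k j f a = (fst (f (\<psi> a)), snd (f (\<phi> a)))" if "a \<in> Obj pp (Suc k)" for a
    using that by (cases a) (simp add: NK_prism_def \<psi>_def \<phi>_def)
  have \<psi>_in: "\<psi> a \<in> Obj pp k" and \<phi>_in: "\<phi> a \<in> Obj pp k" if "a \<in> Obj pp (Suc k)" for a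
    using that j by (cases a; auto simp: Obj_iff \<psi>_def \<phi>_def)+
  have \<psi>_leq: "leq (\<psi> a) (\<psi> b)" if "leq a b" for a b
    using that by (cases a; cases b) (auto simp: leq_iff \<psi>_def)
  have \<phi>_leq: "leq (\<phi> a) (\<phi> b)" if "a \<in> Obj pp (Suc k)" "b \<in> Obj pp (Suc k)" "leq a b" for a b
    using that by (cases a; cases b) (auto simp: leq_iff Obj_iff \<phi>_def)
  have leq: "leq (NK_prism pp k j f a) (NK_prism pp k j f b)"
    if a: "a \<in> Obj pp (Suc k)" and b: "b \<in> Obj pp (Suc k)" and "leq a b" for a b
    using F(3)[OF \<psi>_in[OF a] \<psi>_in[OF b] \<psi>_leq] F(3)[OF \<phi>_in[OF a] \<phi>_in[OF b] \<phi>_leq[OF a b]] that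
    unfolding val[OF a] val[OF b] by (simp add: leq_def)
  show ?thesis
  proof (rule NK_simpI)
    show "NK_prism pp k j f \<in> extensional (Obj pp (Suc k))" by (simp add: NK_prism_def)
  next
    fix a assume a: "a \<in> Obj pp (Suc k)"
    show "NK_prism pp k j f a \<in> Obj ps q"
      using F(2)[OF \<psi>_in[OF a]] F(2)[OF \<phi>_in[OF a]] unfolding val[OF a] Obj_def by auto
  next
    fix a b assume a: "a \<in> Obj pp (Suc k)" and b: "b \<in> Obj pp (Suc k)" and ab: "in_w a b"
    then have "in_w (\<psi> a) (\<psi> b)" by (cases a; cases b) (auto simp: in_w_def leq_iff \<psi>_def)
    then show "in_w (NK_prism pp k j f a) (NK_prism pp k j f b)"
      using F(4)[OF \<psi>_in[OF a] \<psi>_in[OF b]] leq[OF a b] ab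
      unfolding val[OF a] val[OF b] in_w_def by simp
  next
    fix i a b assume i: "i < length ps" and a: "a \<in> Obj pp (Suc k)" and b: "b \<in> Obj pp (Suc k)"
      and ab: "in_v i a b"
    then have "in_v i (\<psi> a) (\<psi> b)" by (cases a; cases b) (auto simp: in_v_def leq_iff \<psi>_def)
    then show "in_v i (NK_prism pp k j f a) (NK_prism pp k j f b)"
      using F(5)[OF i \<psi>_in[OF a] \<psi>_in[OF b]] leq[OF a b] ab
      unfolding val[OF a] val[OF b] in_v_def by simp
  qed (rule leq)
qed

lemma Obj_change_last: "(xs, l) \<in> Obj pp k \<Longrightarrow> l' \<le> k' \<Longrightarrow> (xs, l') \<in> Obj pp k'"
  by (simp add: Obj_iff)

lemma Obj_last_le: "(xs, l) \<in> Obj pp k \<Longrightarrow> l \<le> k"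
  by (simp add: Obj_iff)

lemma NK_simp_extensional: "f \<in> NK_simp ps q pp k \<Longrightarrow> f \<in> extensional (Obj pp k)"
  by (rule NK_simpD(1))

lemma NK_prism_extensional: "NK_prism pp k j f \<in> extensional (Obj pp (Suc k))"
  by (simp add: NK_prism_def)

lemma NK_project_apply: "(xs, l) \<in> Obj pp k \<Longrightarrow> NK_project pp k f (xs, l) = (fst (f (xs, l)), snd (f (replicate (length pp) 0, l)))"
  by (simp add: NK_project_def)

lemma NK_prism_first_face:
  assumes x: "x \<in> NK_simp ps q pp k"
  shows "NK_act pp (coface_list 0 k) (NK_prism pp k 0 x) = x"
proof -
  have sk: "coface_list 0 k \<in> mono_list k (Suc k)" using coface_list_in_mono_list by simp
  show ?thesis
  proof (rule extensionalityI[OF NK_act_extensional[OF sk] NK_simp_extensional[OF x]])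
  fix a assume a: "a \<in> Obj pp k"
  obtain xs l where ae: "a = (xs, l)" by (cases a)
  have l: "l \<le> k" using Obj_last_le a ae by simp
  have o: "(xs, Suc l) \<in> Obj pp (Suc k)" using Obj_change_last[of xs l pp k "Suc l" "Suc k"] a ae l by simp
  show "NK_act pp (coface_list 0 k) (NK_prism pp k 0 x) a = x a"
    unfolding ae NK_act_apply[OF sk a[unfolded ae]]
    using coface_list_nth[OF l, of 0] NK_prism_apply[OF o, of 0 x] by simp
  qed
qed

lemma NK_prism_adjacent_faces:
  assumes i: "i < k"
  shows "NK_act pp (coface_list (Suc i) k) (NK_prism pp k i x) = NK_act pp (coface_list (Suc i) k) (NK_prism pp k (Suc i) x)"
proof -
  have sk: "coface_list (Suc i) k \<in> mono_list k (Suc k)" using coface_list_in_mono_list i by simp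
  show ?thesis
  proof (rule extensionalityI[OF NK_act_extensional[OF sk] NK_act_extensional[OF sk]])
    fix a assume a: "a \<in> Obj pp k"
    obtain xs l where ae: "a = (xs, l)" by (cases a)
    have l: "l \<le> k" using Obj_last_le a ae by simp
    define e where "e = (if l < Suc i then l else Suc l)"
    have o: "(xs, e) \<in> Obj pp (Suc k)" using Obj_change_last[of xs l pp k e "Suc k"] a ae l by (simp add: e_def)
    have sn: "coface_list (Suc i) k ! l = e" using coface_list_nth[OF l] by (simp add: e_def)
    show "NK_act pp (coface_list (Suc i) k) (NK_prism pp k i x) a = NK_act pp (coface_list (Suc i) k) (NK_prism pp k (Suc i) x) a"
      unfolding ae NK_act_apply[OF sk a[unfolded ae]] sn NK_prism_apply[OF o]
      by (simp add: e_def)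
  qed
qed

lemma NK_prism_initial:
  assumes j: "j \<le> k"
  shows "NK_act pp [0..<Suc j] (NK_prism pp k j x) = NK_act pp [0..<Suc j] (NK_project pp k x)"
proof -
  have sk: "[0..<Suc j] \<in> mono_list j (Suc k)" using upt_in_mono_list j by simp
  have sk2: "[0..<Suc j] \<in> mono_list j k" using upt_in_mono_list j by simp
  show ?thesis
  proof (rule extensionalityI[OF NK_act_extensional[OF sk] NK_act_extensional[OF sk2]])
    fix a assume a: "a \<in> Obj pp j"
    obtain xs l where ae: "a = (xs, l)" by (cases a)
    have l: "l \<le> j" using Obj_last_le a ae by simp
    have o1: "(xs, l) \<in> Obj pp (Suc k)" using Obj_change_last[of xs l pp j l "Suc k"] a ae l j by simp
    have o2: "(xs, l) \<in> Obj pp k" using Obj_change_last[of xs l pp j l k] a ae l j by simp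
    have nn: "[0..<Suc j] ! l = l" using l by (simp del: upt_Suc)
    show "NK_act pp [0..<Suc j] (NK_prism pp k j x) a = NK_act pp [0..<Suc j] (NK_project pp k x) a"
      unfolding ae NK_act_apply[OF sk a[unfolded ae]] NK_act_apply[OF sk2 a[unfolded ae]] nn
        NK_prism_apply[OF o1] NK_project_apply[OF o2] using l by simp
  qed
qed

lemma NK_prism_stationary:
  assumes j: "j \<le> k" and y: "y \<in> NK_simp ps q pp k" and G: "NK_project pp k y = y"
  shows "NK_prism pp k j y = NK_act pp (codegeneracy_list j k) y"
proof -
  have sk: "codegeneracy_list j k \<in> mono_list (Suc k) k" using codegeneracy_list_in_mono_list j by simp
  show ?thesis
  proof (rule extensionalityI[OF NK_prism_extensional NK_act_extensional[OF sk]])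
    fix a assume a: "a \<in> Obj pp (Suc k)"
    obtain xs l where ae: "a = (xs, l)" by (cases a)
    have l: "l \<le> Suc k" using Obj_last_le a ae by simp
    show "NK_prism pp k j y a = NK_act pp (codegeneracy_list j k) y a"
    proof (cases "l \<le> j")
      case True
      have o: "(xs, l) \<in> Obj pp k" using Obj_change_last[of xs l pp "Suc k" l k] a ae True j by simp
      have "NK_project pp k y (xs, l) = y (xs, l)" using G by simp
      then have "snd (y (replicate (length pp) 0, l)) = snd (y (xs, l))"
        unfolding NK_project_apply[OF o] by (metis snd_conv)
      then show ?thesis unfolding ae NK_act_apply[OF sk a[unfolded ae]] NK_prism_apply[OF a[unfolded ae]]
        using codegeneracy_list_nth[OF l, of j] True by simp
    next
      case False
      then show ?thesis unfolding ae NK_act_apply[OF sk a[unfolded ae]] NK_prism_apply[OF a[unfolded ae]]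
        using codegeneracy_list_nth[OF l, of j] by simp
    qed
  qed
qed

lemma NK_prism_natural:
  assumes th: "\<theta> \<in> mono_list k m" and j: "j \<le> k"
  shows "NK_prism pp k j (NK_act pp \<theta> x) = NK_act pp (prism_lift \<theta> j k) (NK_prism pp m (\<theta> ! j) x)"
proof -
  note M = mono_listD[OF th]
  have sk: "prism_lift \<theta> j k \<in> mono_list (Suc k) (Suc m)" using prism_lift_in_mono_list th j by simp
  show ?thesis
  proof (rule extensionalityI[OF NK_prism_extensional NK_act_extensional[OF sk]])
    fix a assume a: "a \<in> Obj pp (Suc k)"
    obtain xs l where ae: "a = (xs, l)" by (cases a)
    have l: "l \<le> Suc k" using Obj_last_le a ae by simp
    have tl: "prism_lift \<theta> j k ! l \<le> Suc m" using mono_listD(2)[OF sk l] .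
    have o2: "(xs, prism_lift \<theta> j k ! l) \<in> Obj pp (Suc m)" using Obj_change_last[OF a[unfolded ae] tl] .
    show "NK_prism pp k j (NK_act pp \<theta> x) a = NK_act pp (prism_lift \<theta> j k) (NK_prism pp m (\<theta> ! j) x) a"
    proof (cases "l \<le> j")
      case True
      have o: "(xs, l) \<in> Obj pp k" using Obj_change_last[of xs l pp "Suc k" l k] a ae True j by simp
      have oz: "(replicate (length pp) 0, l) \<in> Obj pp k" using True j by (simp add: Obj_iff)
      have le: "\<theta> ! l \<le> \<theta> ! j" using M(3)[of l j] True j by simp
      show ?thesis
        unfolding ae NK_act_apply[OF sk a[unfolded ae]] NK_prism_apply[OF a[unfolded ae]] NK_prism_apply[OF o2]
        using prism_lift_nth[OF l, of \<theta> j] True le NK_act_apply[OF th o] NK_act_apply[OF th oz] by simp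
    next
      case False
      have o: "(xs, l - 1) \<in> Obj pp k" using Obj_change_last[of xs l pp "Suc k" "l - 1" k] a ae l by simp
      have le: "\<theta> ! j \<le> \<theta> ! (l - 1)" using M(3)[of j "l - 1"] False l by simp
      show ?thesis
        unfolding ae NK_act_apply[OF sk a[unfolded ae]] NK_prism_apply[OF a[unfolded ae]] NK_prism_apply[OF o2]
        using prism_lift_nth[OF l, of \<theta> j] False le NK_act_apply[OF th o] by simp
    qed
  qed
qed

lemma NK_project_in_NK_simp:
  assumes "length pp = length ps" "x \<in> NK_simp ps q pp k"
  shows "NK_project pp k x \<in> NK_simp ps q pp k"
  using unit_Delta_NK_retraction[OF assms] unit_Delta_in_NK_simp[OF assms(1) NK_retraction_in_Delta_simp[OF assms]]
  by simp

lemma NK_simplicial_homotopy: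
  assumes len: "length pp = length ps"
  shows "simplicial_homotopy (NK_simp ps q pp) (NK_act pp) (NK_project pp) (NK_prism pp)"
  by unfold_locales (simp_all del: upt_Suc add: NK_project_in_NK_simp[OF len] NK_prism_in_NK_simp
      NK_prism_first_face NK_prism_adjacent_faces NK_prism_initial NK_prism_natural)

lemma unit_Delta_simplicial_map:
  "length pp = length ps \<Longrightarrow>
     simplicial_map (Delta_simp ps q pp) (Delta_act pp) (NK_simp ps q pp) (NK_act pp) (unit_Delta ps q pp)"
  unfolding simplicial_map_def using unit_Delta_in_NK_simp unit_Delta_natural by blast

lemma NK_retraction_simplicial_map:
  "length pp = length ps \<Longrightarrow>
     simplicial_map (NK_simp ps q pp) (NK_act pp) (Delta_simp ps q pp) (Delta_act pp) (NK_retraction pp)"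
  unfolding simplicial_map_def using NK_retraction_in_Delta_simp NK_retraction_natural by blast

lemma NK_prism_unit_Delta:
  assumes len: "length pp = length ps" and a: "a \<in> Delta_simp ps q pp k" and j: "j \<le> k"
  shows "NK_prism pp k j (unit_Delta ps q pp k a) = NK_act pp (codegeneracy_list j k) (unit_Delta ps q pp k a)"
  using NK_prism_stationary[OF j unit_Delta_in_NK_simp[OF len a]]
    unit_Delta_NK_retraction[OF len unit_Delta_in_NK_simp[OF len a]] NK_retraction_unit_Delta[OF len a]
  by simp

theorem proposition4p6:
  fixes n :: nat and ps :: "nat list" and q :: nat
  assumes "n \<ge> 1" and "length ps = n"
  shows "reedy_weq n (Delta_simp ps q) Delta_act (NK_simp ps q) NK_act (unit_Delta ps q)"
  unfolding reedy_weq_def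
proof (intro allI impI)
  \<comment> \<open>the argument works for every \<open>n\<close>\<close>
  fix pp :: "nat list" assume "length pp = n"
  then have len: "length pp = length ps" using assms(2) by simp
  interpret simplicial_homotopy "NK_simp ps q pp" "NK_act pp" "NK_project pp" "NK_prism pp"
    by (rule NK_simplicial_homotopy[OF len])
  show "sset_weq (Delta_simp ps q pp) (Delta_act pp) (NK_simp ps q pp) (NK_act pp) (unit_Delta ps q pp)"
    by (rule sset_weq_if_deformation_retract[OF unit_Delta_simplicial_map[OF len] NK_retraction_simplicial_map[OF len]])
      (simp_all add: NK_retraction_unit_Delta[OF len] unit_Delta_NK_retraction[OF len] NK_prism_unit_Delta[OF len])
qed

end
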